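(* Let $\theta$ be a symmetric probability measure on $\mathbb{Z}^4$ with small exponential moments, not supported on a strict subgroup, with covariance matrix $\sigma^2\mathrm{Id}$, let $S$ be the random walk with jump law $\theta$ started at $0$ and $G(x)=\sum_{k\ge0}P(S_k=x)$ its Green function. For every integer $p\ge1$ there exists a constant $C(p)$ such that for every $n\ge2$, $$E\Big[\Big(\sum_{j=0}^nG(S_j)\Big)^p\Big]\le C(p)(\log n)^p.$$ *)

theory Defs
  imports "HOL-Probability.Probability"
begin

definition znorm :: "int ^ 4 \<Rightarrow> real" where
  "znorm x = sqrt (\<Sum>i\<in>UNIV. (real_of_int (x $ i))\<^sup>2)"

definition add_subgroup :: "(int ^ 4) set \<Rightarrow> bool" where
  "add_subgroup H \<longleftrightarrow> 0 \<in> H \<and> (\<forall>x\<in>H. \<forall>y\<in>H. x - y \<in> H)"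

primrec walk_pmf :: "(int ^ 4) pmf \<Rightarrow> nat \<Rightarrow> (int ^ 4) pmf" where
  "walk_pmf \<theta> 0 = return_pmf 0"
| "walk_pmf \<theta> (Suc k) = bind_pmf (walk_pmf \<theta> k) (\<lambda>s. map_pmf (\<lambda>y. s + y) \<theta>)"

text \<open>Law of the path (S_0, ..., S_n) as a list of length n+1.\<close>
primrec path_pmf :: "(int ^ 4) pmf \<Rightarrow> nat \<Rightarrow> (int ^ 4) list pmf" where
  "path_pmf \<theta> 0 = return_pmf [0]"
| "path_pmf \<theta> (Suc n) = bind_pmf (path_pmf \<theta> n) (\<lambda>xs. map_pmf (\<lambda>y. xs @ [last xs + y]) \<theta>)"

definition green :: "(int ^ 4) pmf \<Rightarrow> int ^ 4 \<Rightarrow> ennreal" where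
  "green \<theta> x = (\<Sum>k. ennreal (pmf (walk_pmf \<theta> k) x))"

end

theory Submission
  imports Defs "HOL-Real_Asymp.Real_Asymp"
begin

text \<open>
  The heart of the matter is the heat-kernel bound \<open>P(S\<^sub>j = y) \<le> K / j\<^sup>2\<close> valid in
  dimension four. Granting it, symmetry gives \<open>E[G(x + S\<^sub>j)] \<le> K / (j + 1)\<close>, the left-hand
  side being the sum of \<open>P(S\<^sub>k = -x)\<close> over \<open>k \<ge> j\<close>; so the expected Green sum of the walk
  started anywhere is at most \<open>L = K (1 + ln (n + 1))\<close>. The \<open>p\<close>-th moment is then
  controlled by induction on \<open>p\<close>: expanding \<open>(G(x) + rest)\<^sup>p\<^sup>+\<^sup>1\<close> and applying the Markov
  property at each step gives the bound \<open>p! L\<^sup>p\<close>.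

  The heat-kernel bound comes from the characteristic function \<open>\<phi>\<close> of the jump law.
  Instead of the Fourier inversion integral we use its Riemann sum on the grid
  \<open>(2\<pi>/N) {0..N-1}\<^sup>4\<close>, which dominates \<open>N\<^sup>4 P(S\<^sub>j = y)\<close> exactly because character sums
  over the grid detect divisibility by \<open>N\<close>. Aperiodicity puts the points with
  \<open>|\<phi>| = 1\<close> on \<open>{0, \<pi>, 2\<pi>}\<^sup>4\<close>; near them \<open>|\<phi>| \<le> 1 - c |t - t\<^sub>0|\<^sup>2\<close> by the second-order Taylor
  expansion, away from them \<open>|\<phi>| \<le> 1 - \<delta>\<close> by compactness. With \<open>N \<approx> \<surd>j\<close> the resulting
  Gaussian sums are of order \<open>N\<^sup>4 / j\<^sup>2\<close>.
\<close>

lemma walk_pmf_add: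
  "walk_pmf \<theta> (j + k) = bind_pmf (walk_pmf \<theta> j) (\<lambda>s. map_pmf (\<lambda>u. s + u) (walk_pmf \<theta> k))"
proof (induction k)
  case 0
  then show ?case by (simp add: bind_return_pmf')
next
  case (Suc k)
  show ?case
    by (simp add: Suc bind_assoc_pmf bind_map_pmf map_bind_pmf pmf.map_comp o_def add.assoc[symmetric])
qed

lemma walk_pmf_1 [simp]: "walk_pmf \<theta> 1 = \<theta>"
proof -
  have "(+) (0::int^4) = (\<lambda>x. x)" by auto
  then show ?thesis by (simp add: bind_return_pmf)
qed

lemma walk_pmf_Suc_left:
  "walk_pmf \<theta> (Suc j) = bind_pmf \<theta> (\<lambda>s. map_pmf (\<lambda>u. s + u) (walk_pmf \<theta> j))"
  using walk_pmf_add[of \<theta> 1 j] by (simp only: walk_pmf_1 plus_1_eq_Suc)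

lemma map_pmf_uminus_eq_self:
  fixes q :: "'a::group_add pmf"
  assumes "\<And>x. pmf q (- x) = pmf q x"
  shows "map_pmf uminus q = q"
proof (rule pmf_eqI)
  fix x :: 'a
  have "pmf (map_pmf uminus q) (- (- x)) = pmf q (- x)"
    by (rule pmf_map_inj') (simp add: inj_def)
  then show "pmf (map_pmf uminus q) x = pmf q x" using assms by simp
qed

lemma map_pmf_uminus_walk_pmf:
  assumes symmetric: "\<And>x. pmf \<theta> (- x) = pmf \<theta> x"
  shows "map_pmf uminus (walk_pmf \<theta> j) = walk_pmf \<theta> j"
proof (induction j)
  case 0
  then show ?case by simp
next
  case (Suc j)
  have "map_pmf uminus (walk_pmf \<theta> (Suc j))
      = bind_pmf (walk_pmf \<theta> j) (\<lambda>s. map_pmf (\<lambda>y. - (s + y)) \<theta>)"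
    by (simp add: map_bind_pmf pmf.map_comp o_def)
  also have "\<dots> = bind_pmf (walk_pmf \<theta> j) (\<lambda>s. map_pmf (\<lambda>y. - s + y) (map_pmf uminus \<theta>))"
    by (intro bind_pmf_cong refl) (simp add: pmf.map_comp o_def; rule map_pmf_cong; auto simp: algebra_simps)
  also have "\<dots> = bind_pmf (map_pmf uminus (walk_pmf \<theta> j)) (\<lambda>s. map_pmf (\<lambda>y. s + y) \<theta>)"
    by (simp only: map_pmf_uminus_eq_self[OF symmetric] bind_map_pmf)
  also have "\<dots> = walk_pmf \<theta> (Suc j)" by (simp add: Suc)
  finally show ?case .
qed

lemma pmf_walk_pmf_uminus:
  assumes symmetric: "\<And>x. pmf \<theta> (- x) = pmf \<theta> x"
  shows "pmf (walk_pmf \<theta> j) (- y) = pmf (walk_pmf \<theta> j) y"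
proof -
  have "pmf (map_pmf uminus (walk_pmf \<theta> j)) (- y) = pmf (walk_pmf \<theta> j) y"
    by (rule pmf_map_inj') (simp add: inj_def)
  then show ?thesis by (simp add: map_pmf_uminus_walk_pmf[OF symmetric])
qed

primrec path_from :: "(int ^ 4) pmf \<Rightarrow> int ^ 4 \<Rightarrow> nat \<Rightarrow> (int ^ 4) list pmf" where
  "path_from \<theta> x 0 = return_pmf [x]"
| "path_from \<theta> x (Suc n) = bind_pmf \<theta> (\<lambda>y. map_pmf (\<lambda>xs. x # xs) (path_from \<theta> (x + y) n))"

lemma path_from_nonempty: "xs \<in> set_pmf (path_from \<theta> x n) \<Longrightarrow> xs \<noteq> []"
  by (cases n) auto

lemma path_from_Suc_snoc:
  "path_from \<theta> x (Suc n) = bind_pmf (path_from \<theta> x n) (\<lambda>xs. map_pmf (\<lambda>y. xs @ [last xs + y]) \<theta>)"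
proof (induction n arbitrary: x)
  case 0
  then show ?case by (simp add: map_pmf_def bind_return_pmf)
next
  case (Suc n)
  have "path_from \<theta> x (Suc (Suc n))
      = bind_pmf \<theta> (\<lambda>y. bind_pmf (path_from \<theta> (x + y) n)
            (\<lambda>xs. map_pmf (\<lambda>z. x # (xs @ [last xs + z])) \<theta>))"
    by (simp only: path_from.simps(2)[of \<theta> x "Suc n"] Suc map_bind_pmf pmf.map_comp o_def)
  also have "\<dots> = bind_pmf \<theta> (\<lambda>y. bind_pmf (path_from \<theta> (x + y) n)
            (\<lambda>xs. map_pmf (\<lambda>z. (x # xs) @ [last (x # xs) + z]) \<theta>))"
    by (intro bind_pmf_cong refl) (auto dest: path_from_nonempty)
  also have "\<dots> = bind_pmf (path_from \<theta> x (Suc n)) (\<lambda>xs. map_pmf (\<lambda>y. xs @ [last xs + y]) \<theta>)"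
    by (simp add: bind_assoc_pmf bind_map_pmf)
  finally show ?case .
qed

lemma path_pmf_eq_path_from: "path_pmf \<theta> n = path_from \<theta> 0 n"
proof (induction n)
  case 0
  then show ?case by simp
next
  case (Suc n)
  then show ?case by (simp only: path_pmf.simps path_from_Suc_snoc)
qed

section \<open>Moments of the Green sum under a heat-kernel bound\<close>

definition green_after :: "(int ^ 4) pmf \<Rightarrow> nat \<Rightarrow> int ^ 4 \<Rightarrow> ennreal" where
  "green_after \<theta> j x = (\<integral>\<^sup>+ s. green \<theta> (x + s) \<partial>measure_pmf (walk_pmf \<theta> j))"

lemma green_after_0: "green_after \<theta> 0 x = green \<theta> x"
  by (simp add: green_after_def)

lemma green_after_Suc: "green_after \<theta> (Suc j) x = (\<integral>\<^sup>+ y. green_after \<theta> j (x + y) \<partial>measure_pmf \<theta>)"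
  unfolding green_after_def walk_pmf_Suc_left by (simp add: add.assoc)

lemma green_after_eq_suminf:
  assumes symmetric: "\<And>x. pmf \<theta> (- x) = pmf \<theta> x"
  shows "green_after \<theta> j x = (\<Sum>k. ennreal (pmf (walk_pmf \<theta> (j + k)) (- x)))"
proof -
  have shift: "(\<integral>\<^sup>+ s. ennreal (pmf (walk_pmf \<theta> k) (x + s)) \<partial>measure_pmf (walk_pmf \<theta> j))
      = ennreal (pmf (walk_pmf \<theta> (j + k)) (- x))" for k
  proof -
    have "pmf (map_pmf (\<lambda>u. s + u) (walk_pmf \<theta> k)) (- x) = pmf (walk_pmf \<theta> k) (x + s)" for s
    proof -
      have minus: "- x = s + (- (x + s))" by (simp add: algebra_simps)
      have "pmf (map_pmf (\<lambda>u. s + u) (walk_pmf \<theta> k)) (s + (- (x + s))) = pmf (walk_pmf \<theta> k) (- (x + s))"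
        by (rule pmf_map_inj') (simp add: inj_def)
      also have "\<dots> = pmf (walk_pmf \<theta> k) (x + s)" by (rule pmf_walk_pmf_uminus[OF symmetric])
      finally show ?thesis by (simp only: minus)
    qed
    then show ?thesis by (simp add: walk_pmf_add ennreal_pmf_bind)
  qed
  have "green_after \<theta> j x
      = (\<integral>\<^sup>+ s. (\<Sum>k. ennreal (pmf (walk_pmf \<theta> k) (x + s))) \<partial>measure_pmf (walk_pmf \<theta> j))"
    by (simp add: green_after_def green_def)
  also have "\<dots> = (\<Sum>k. \<integral>\<^sup>+ s. ennreal (pmf (walk_pmf \<theta> k) (x + s)) \<partial>measure_pmf (walk_pmf \<theta> j))"
    by (rule nn_integral_suminf) simp
  finally show ?thesis by (simp only: shift)
qed

lemma sums_inverse_consecutive_product: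
  "(\<lambda>k. K / ((real (j + k) + 1) * (real (j + k) + 2))) sums (K / (real j + 1))"
proof -
  define f where "f n = - K / (real (j + n) + 1)" for n
  have "f \<longlonglongrightarrow> - K * 0"
    unfolding f_def by real_asymp
  then have "(\<lambda>n. f (Suc n) - f n) sums (0 - f 0)"
    using telescope_sums by fastforce
  moreover have "f (Suc n) - f n = K / ((real (j + n) + 1) * (real (j + n) + 2))" for n
    unfolding f_def by (simp add: field_simps)
  ultimately show ?thesis unfolding f_def by simp
qed

lemma heat_kernel_constant_nonneg:
  assumes "\<And>j y. pmf (walk_pmf \<theta> j) y \<le> K / ((real j + 1) * (real j + 2))"
  shows "K \<ge> 0"
  using assms[of 0 0] pmf_nonneg[of "walk_pmf \<theta> 0" 0] by simp

lemma green_after_le: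
  assumes symmetric: "\<And>x. pmf \<theta> (- x) = pmf \<theta> x"
    and heat_kernel: "\<And>j y. pmf (walk_pmf \<theta> j) y \<le> K / ((real j + 1) * (real j + 2))"
  shows "green_after \<theta> j x \<le> ennreal (K / (real j + 1))"
proof -
  have K: "K \<ge> 0" by (rule heat_kernel_constant_nonneg[OF heat_kernel])
  have "green_after \<theta> j x \<le> (\<Sum>k. ennreal (K / ((real (j + k) + 1) * (real (j + k) + 2))))"
    unfolding green_after_eq_suminf[OF symmetric] by (intro suminf_le ennreal_leI heat_kernel) auto
  also have "\<dots> = ennreal (K / (real j + 1))"
    using K sums_inverse_consecutive_product[of K j]
    by (simp add: suminf_ennreal2 sums_summable sums_unique[symmetric])
  finally show ?thesis .
qed

definition green_moment :: "(int ^ 4) pmf \<Rightarrow> nat \<Rightarrow> nat \<Rightarrow> int ^ 4 \<Rightarrow> ennreal" where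
  "green_moment \<theta> p n x = (\<integral>\<^sup>+ xs. (\<Sum>y\<leftarrow>xs. green \<theta> y) ^ p \<partial>measure_pmf (path_from \<theta> x n))"

lemma green_moment_0: "green_moment \<theta> p 0 x = green \<theta> x ^ p"
  by (simp add: green_moment_def)

lemma green_moment_Suc:
  "green_moment \<theta> p (Suc m) x = (\<integral>\<^sup>+ y. \<integral>\<^sup>+ xs. (green \<theta> x + (\<Sum>z\<leftarrow>xs. green \<theta> z)) ^ p
       \<partial>measure_pmf (path_from \<theta> (x + y) m) \<partial>measure_pmf \<theta>)"
  by (simp add: green_moment_def)

lemma power_Suc_add_le:
  fixes a b :: "'a::{comm_semiring_1, ordered_comm_semiring, canonically_ordered_monoid_add}"
  shows "(a + b) ^ Suc q \<le> b ^ Suc q + of_nat (Suc q) * a * (a + b) ^ q"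
proof (induction q)
  case 0
  then show ?case by (simp add: add.commute)
next
  case (Suc q)
  have "(a + b) ^ Suc (Suc q) = a * (a + b) ^ Suc q + b * (a + b) ^ Suc q"
    by (simp add: distrib_right)
  also have "\<dots> \<le> a * (a + b) ^ Suc q + b * (b ^ Suc q + of_nat (Suc q) * a * (a + b) ^ q)"
    by (intro add_mono order.refl mult_left_mono Suc) auto
  also have "\<dots> = b ^ Suc (Suc q) + a * (a + b) ^ Suc q + of_nat (Suc q) * a * (b * (a + b) ^ q)"
    by (simp add: algebra_simps)
  also have "\<dots> \<le> b ^ Suc (Suc q) + a * (a + b) ^ Suc q + of_nat (Suc q) * a * ((a + b) ^ Suc q)"
  proof -
    have "b * (a + b) ^ q \<le> (a + b) * (a + b) ^ q"
      by (rule mult_right_mono) (simp_all add: le_iff_add, metis add.commute)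
    then show ?thesis by (intro add_mono order.refl mult_left_mono) simp_all
  qed
  also have "\<dots> = b ^ Suc (Suc q) + of_nat (Suc (Suc q)) * a * (a + b) ^ Suc q"
    by (simp add: algebra_simps)
  finally show ?case .
qed

text \<open>
  Conditioning on the first step: the walk from \<open>x\<close> contributes \<open>G(x)\<close> and then restarts from
  \<open>x + y\<close>. Unfolding \<open>m\<close> such steps turns the factors \<open>G(x)\<close> into \<open>E[G(x + S\<^sub>j)]\<close>.
\<close>
lemma green_moment_Suc_le:
  assumes moment_le: "\<And>m x. m \<le> n \<Longrightarrow> green_moment \<theta> q m x \<le> B"
  shows "m \<le> n \<Longrightarrow> green_moment \<theta> (Suc q) m x \<le> of_nat (Suc q) * B * (\<Sum>j\<le>m. green_after \<theta> j x)"
proof (induction m arbitrary: x)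
  case 0
  have "green_moment \<theta> (Suc q) 0 x = (green \<theta> x + 0) ^ Suc q" by (simp add: green_moment_0)
  also have "\<dots> \<le> 0 ^ Suc q + of_nat (Suc q) * green \<theta> x * (green \<theta> x + 0) ^ q"
    by (rule power_Suc_add_le)
  also have "\<dots> = of_nat (Suc q) * green \<theta> x * green_moment \<theta> q 0 x" by (simp add: green_moment_0)
  also have "\<dots> \<le> of_nat (Suc q) * green \<theta> x * B"
    by (intro mult_left_mono moment_le) auto
  also have "\<dots> = of_nat (Suc q) * B * (\<Sum>j\<le>0. green_after \<theta> j x)"
    by (simp add: green_after_0 mult_ac)
  finally show ?case .
next
  case (Suc m)
  let ?S = "\<lambda>xs. (\<Sum>z\<leftarrow>xs. green \<theta> z)" and ?G = "green \<theta> x"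
  have "green_moment \<theta> (Suc q) (Suc m) x \<le> (\<integral>\<^sup>+ y. \<integral>\<^sup>+ xs.
       (?S xs ^ Suc q + of_nat (Suc q) * ?G * (?G + ?S xs) ^ q)
       \<partial>measure_pmf (path_from \<theta> (x + y) m) \<partial>measure_pmf \<theta>)"
    unfolding green_moment_Suc by (intro nn_integral_mono power_Suc_add_le)
  also have "\<dots> = (\<integral>\<^sup>+ y. green_moment \<theta> (Suc q) m (x + y) \<partial>measure_pmf \<theta>)
       + of_nat (Suc q) * ?G * green_moment \<theta> q (Suc m) x"
    by (simp add: green_moment_Suc nn_integral_add nn_integral_cmult green_moment_def)
  also have "\<dots> \<le> (\<integral>\<^sup>+ y. of_nat (Suc q) * B * (\<Sum>j\<le>m. green_after \<theta> j (x + y)) \<partial>measure_pmf \<theta>)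
       + of_nat (Suc q) * ?G * B"
    using Suc by (intro add_mono nn_integral_mono mult_left_mono moment_le) auto
  also have "\<dots> = of_nat (Suc q) * B * (\<Sum>j\<le>m. green_after \<theta> (Suc j) x) + of_nat (Suc q) * ?G * B"
    by (simp add: nn_integral_cmult nn_integral_sum green_after_Suc)
  also have "\<dots> = of_nat (Suc q) * B * ((\<Sum>j\<le>m. green_after \<theta> (Suc j) x) + green_after \<theta> 0 x)"
    by (simp add: green_after_0 distrib_left mult_ac)
  also have "\<dots> = of_nat (Suc q) * B * (\<Sum>j\<le>Suc m. green_after \<theta> j x)"
    unfolding sum.atMost_Suc_shift[of _ m] by (simp add: ac_simps)
  finally show ?case .
qed

lemma green_moment_le:
  assumes "L \<ge> 0" and "\<And>m x. m \<le> n \<Longrightarrow> (\<Sum>j\<le>m. green_after \<theta> j x) \<le> ennreal L"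
  shows "m \<le> n \<Longrightarrow> green_moment \<theta> p m x \<le> ennreal (fact p * L ^ p)"
proof (induction p arbitrary: m x)
  case 0
  then show ?case by (simp add: green_moment_def measure_pmf.emeasure_space_1)
next
  case (Suc q)
  have "green_moment \<theta> (Suc q) m x
      \<le> of_nat (Suc q) * ennreal (fact q * L ^ q) * (\<Sum>j\<le>m. green_after \<theta> j x)"
    by (rule green_moment_Suc_le[of n]) (use Suc in auto)
  also have "\<dots> \<le> of_nat (Suc q) * ennreal (fact q * L ^ q) * ennreal L"
    by (intro mult_left_mono assms(2) Suc.prems) auto
  also have "\<dots> = ennreal (fact (Suc q) * L ^ Suc q)"
    using assms(1) by (simp add: ennreal_of_nat_eq_real_of_nat ennreal_mult mult_ac)
  finally show ?case .
qed

lemma sum_inverse_Suc_le_ln: "(\<Sum>j\<le>n. 1 / (real j + 1)) \<le> 1 + ln (real n + 1)"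
proof (induction n)
  case 0
  then show ?case by simp
next
  case (Suc n)
  have "ln ((real n + 1) / (real n + 2)) \<le> (real n + 1) / (real n + 2) - 1"
    by (rule ln_le_minus_one) auto
  then have "1 / (real n + 2) \<le> ln (real n + 2) - ln (real n + 1)"
    by (simp add: ln_div field_simps)
  then show ?case using Suc by (simp add: add_ac)
qed

lemma one_plus_ln_Suc_le: "n \<ge> 2 \<Longrightarrow> 1 + ln (real n + 1) \<le> 4 * ln (real n)"
proof -
  assume n: "n \<ge> 2"
  have "ln (1/2) \<le> (1::real) / 2 - 1" by (rule ln_le_minus_one) auto
  then have "ln 2 \<ge> (1::real) / 2" by (simp add: ln_div)
  moreover have "ln 2 \<le> ln (real n)" using n by simp
  moreover have "ln (real n + 1) \<le> ln (2 * real n)" using n by simp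
  moreover have "ln (2 * real n) = ln 2 + ln (real n)" using n by (simp add: ln_mult)
  ultimately show ?thesis by linarith
qed

lemma green_sum_moment_le:
  assumes symmetric: "\<And>x. pmf \<theta> (- x) = pmf \<theta> x"
    and heat_kernel: "\<And>j y. pmf (walk_pmf \<theta> j) y \<le> K / ((real j + 1) * (real j + 2))"
    and n: "n \<ge> 2"
  shows "(\<integral>\<^sup>+ xs. (\<Sum>x\<leftarrow>xs. green \<theta> x) ^ p \<partial>measure_pmf (path_pmf \<theta> n))
           \<le> ennreal (fact p * (4 * K) ^ p * ln (real n) ^ p)"
proof -
  have K: "K \<ge> 0" by (rule heat_kernel_constant_nonneg[OF heat_kernel])
  define L where "L = 4 * K * ln (real n)"
  have L: "L \<ge> 0" using K n by (simp add: L_def)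
  have green_sums: "(\<Sum>j\<le>m. green_after \<theta> j x) \<le> ennreal L" if "m \<le> n" for m x
  proof -
    have "(\<Sum>j\<le>m. green_after \<theta> j x) \<le> (\<Sum>j\<le>m. ennreal (K * (1 / (real j + 1))))"
      by (intro sum_mono) (simp add: green_after_le[OF symmetric heat_kernel])
    also have "\<dots> = ennreal (K * (\<Sum>j\<le>m. 1 / (real j + 1)))"
      using K by (simp add: sum_ennreal sum_distrib_left)
    also have "\<dots> \<le> ennreal (K * (1 + ln (real n + 1)))"
    proof -
      have "ln (real m + 1) \<le> ln (real n + 1)" using that by simp
      then have "(\<Sum>j\<le>m. 1 / (real j + 1)) \<le> 1 + ln (real n + 1)"
        using sum_inverse_Suc_le_ln[of m] by linarith
      then show ?thesis using K by (intro ennreal_leI mult_left_mono)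
    qed
    also have "\<dots> \<le> ennreal L"
      unfolding L_def using mult_left_mono[OF one_plus_ln_Suc_le[OF n] K]
      by (intro ennreal_leI) (simp add: mult_ac)
    finally show ?thesis .
  qed
  have "green_moment \<theta> p n 0 \<le> ennreal (fact p * L ^ p)"
    by (rule green_moment_le[OF L green_sums order.refl])
  then show ?thesis
    by (simp add: green_moment_def path_pmf_eq_path_from L_def power_mult_distrib mult_ac)
qed

lemma power_le_1_plus_power4:
  fixes z :: real
  assumes "k \<le> 4" "z \<ge> 0"
  shows "z ^ k \<le> 1 + z ^ 4"
proof (cases "z \<le> 1")
  case True
  then have "z ^ k \<le> 1" using assms by (simp add: power_le_one)
  moreover have "0 \<le> z ^ 4" using assms by simp
  ultimately show ?thesis by linarith
next
  case False
  then have "z ^ k \<le> z ^ 4" using assms by (intro power_increasing) auto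
  then show ?thesis by simp
qed

lemma power4_le_exp:
  fixes z c :: real
  assumes z: "z \<ge> 0" and c: "c > 0"
  shows "1 + z ^ 4 \<le> (1 + (4 / c) ^ 4) * exp (c * z)"
proof -
  have "c * z / 4 \<le> exp (c * z / 4)" using exp_ge_add_one_self[of "c * z / 4"] by linarith
  then have "(c * z / 4) ^ 4 \<le> exp (c * z / 4) ^ 4"
    using c z by (intro power_mono) auto
  also have "exp (c * z / 4) ^ 4 = exp (c * z)"
    using exp_of_nat_mult[of 4 "c * z / 4"] by simp
  finally have "(c * z / 4) ^ 4 \<le> exp (c * z)" .
  moreover have "z ^ 4 = (4 / c) ^ 4 * (c * z / 4) ^ 4"
    using c by (simp add: power_mult_distrib[symmetric])
  ultimately have "z ^ 4 \<le> (4 / c) ^ 4 * exp (c * z)"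
    by (metis mult_left_mono zero_le_power c less_imp_le zero_le_divide_iff zero_le_numeral)
  moreover have "1 \<le> exp (c * z)" using c z by simp
  moreover have "(1 + (4 / c) ^ 4) * exp (c * z) = exp (c * z) + (4 / c) ^ 4 * exp (c * z)"
    by (simp add: algebra_simps)
  ultimately show ?thesis by linarith
qed

lemma cos_le_Taylor4: "cos (u::real) \<le> 1 - u\<^sup>2 / 2 + u ^ 4 / 24"
proof -
  obtain t where "cos u = (\<Sum>m<4. cos_coeff m * u ^ m) + (cos (t + 1/2 * real 4 * pi) / fact 4) * u ^ 4"
    using Maclaurin_cos_expansion[of u 4] by blast
  moreover have "(\<Sum>m<4. cos_coeff m * u ^ m) = 1 - u\<^sup>2 / 2"
  proof -
    have "{..<4::nat} = {0,1,2,3}" by auto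
    then show ?thesis by (simp add: cos_coeff_def)
  qed
  moreover have "(cos (t + 1/2 * real 4 * pi) / fact 4) * u ^ 4 \<le> u ^ 4 / 24"
  proof -
    have "cos (t + 1/2 * real 4 * pi) \<le> 1" by simp
    moreover have "u ^ 4 \<ge> 0" by (simp add: zero_le_even_power)
    ultimately have "cos (t + 1/2 * real 4 * pi) * u ^ 4 \<le> 1 * u ^ 4"
      by (intro mult_right_mono) auto
    then show ?thesis by (simp add: fact_numeral divide_right_mono)
  qed
  ultimately show ?thesis by linarith
qed

lemma cos_ge_Taylor2: "1 - u\<^sup>2 / 2 \<le> cos (u::real)"
proof -
  obtain t where "cos u = (\<Sum>m<2. cos_coeff m * u ^ m) + (cos (t + 1/2 * real 2 * pi) / fact 2) * u ^ 2"
    using Maclaurin_cos_expansion[of u 2] by blast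
  moreover have "(\<Sum>m<2. cos_coeff m * u ^ m) = 1"
  proof -
    have "{..<2::nat} = {0,1}" by auto
    then show ?thesis by (simp add: cos_coeff_def)
  qed
  moreover have "(cos (t + 1/2 * real 2 * pi) / fact 2) * u ^ 2 \<ge> - (u ^ 2 / 2)"
  proof -
    have "cos (t + 1/2 * real 2 * pi) \<ge> -1" by simp
    moreover have "u ^ 2 \<ge> 0" by simp
    ultimately have "cos (t + 1/2 * real 2 * pi) * u ^ 2 \<ge> -1 * u ^ 2"
      by (intro mult_right_mono) auto
    then show ?thesis by (simp add: fact_numeral)
  qed
  ultimately show ?thesis by linarith
qed

lemma abs_cos_diff_le: "\<bar>cos a - cos b\<bar> \<le> \<bar>a - (b::real)\<bar>"
proof -
  have "\<bar>cos a - cos b\<bar> = 2 * \<bar>sin ((a + b) / 2)\<bar> * \<bar>sin ((b - a) / 2)\<bar>"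
    by (simp add: cos_diff_cos abs_mult)
  also have "\<dots> \<le> 2 * 1 * \<bar>(b - a) / 2\<bar>"
    by (intro mult_mono abs_sin_x_le_abs_x) auto
  finally show ?thesis by simp
qed

lemma abs_cos_diff_le_2: "\<bar>cos a - cos b\<bar> \<le> (2::real)"
  using abs_cos_le_one[of a] abs_cos_le_one[of b] by linarith

text \<open>Since \<open>(1 - \<delta>) (1 + \<delta>/2)\<^sup>2 \<le> 1\<close>, this follows from Bernoulli's inequality for \<open>(1 + \<delta>/2)\<^sup>j\<close>.\<close>
lemma one_minus_power_le:
  fixes \<delta> :: real
  assumes d0: "0 < \<delta>" and d1: "\<delta> \<le> 1" and j: "j \<ge> 1"
  shows "(1 - \<delta>) ^ j \<le> 4 / (\<delta>\<^sup>2 * (real j)\<^sup>2)"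
proof -
  define a where "a = 1 + \<delta> / 2"
  have a1: "a \<ge> 1" unfolding a_def using d0 by simp
  have B: "1 + real j * (\<delta> / 2) \<le> a ^ j"
    unfolding a_def by (rule Bernoulli_inequality) (use d0 in simp)
  have p: "(1 - \<delta>) * a\<^sup>2 \<le> 1"
  proof -
    have "(1 - \<delta>) * a\<^sup>2 = 1 - 3 * \<delta>\<^sup>2 / 4 - \<delta> ^ 3 / 4"
      unfolding a_def power2_eq_square power3_eq_cube by (simp add: field_simps)
    moreover have "0 \<le> 3 * \<delta>\<^sup>2 / 4 + \<delta> ^ 3 / 4" using d0 by simp
    ultimately show ?thesis by linarith
  qed
  have "(1 - \<delta>) ^ j * (a ^ j)\<^sup>2 = ((1 - \<delta>) * a\<^sup>2) ^ j"
    by (simp add: power_mult_distrib power_mult[symmetric] mult.commute)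
  also have "\<dots> \<le> 1 ^ j"
    using p d1 by (intro power_mono) (auto simp: a_def)
  finally have q: "(1 - \<delta>) ^ j * (a ^ j)\<^sup>2 \<le> 1" by simp
  have aj: "a ^ j > 0" using a1 by simp
  have pos: "0 < (a ^ j)\<^sup>2" using aj by (rule zero_less_power)
  have "(1 - \<delta>) ^ j \<le> 1 / (a ^ j)\<^sup>2" by (subst pos_le_divide_eq[OF pos]) (rule q)
  also have "\<dots> \<le> 1 / (real j * (\<delta> / 2))\<^sup>2"
  proof (rule divide_left_mono)
    have "real j * (\<delta> / 2) \<le> a ^ j" using B by linarith
    then show "(real j * (\<delta> / 2))\<^sup>2 \<le> (a ^ j)\<^sup>2"
      using d0 j by (intro power_mono) auto
    have "0 < real j * (\<delta> / 2)" using d0 j by simp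
    then show "0 < (a ^ j)\<^sup>2 * (real j * (\<delta> / 2))\<^sup>2" using aj a1 d0 j by (intro mult_pos_pos zero_less_power) auto
  qed simp
  also have "\<dots> = 4 / (\<delta>\<^sup>2 * (real j)\<^sup>2)" by (simp add: power2_eq_square field_simps)
  finally show ?thesis .
qed

lemma exp_neg_le_inverse: "x > 0 \<Longrightarrow> exp (- x) \<le> 1 / (x::real)"
proof -
  assume x: "x > 0"
  have "x \<le> exp x" using exp_ge_add_one_self[of x] by linarith
  then show ?thesis using x by (simp add: exp_minus field_simps)
qed

lemma sum_inverse_square_tail:
  assumes m1: "m \<ge> 1" and mN: "m \<le> N"
  shows "(\<Sum>n\<in>{Suc m..N}. 1 / (real n)\<^sup>2) \<le> 1 / real m - 1 / real N"
  using mN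
proof (induction N rule: dec_induct)
  case base
  then show ?case by simp
next
  case (step N)
  have N1: "real N \<ge> 1" using step.hyps m1 by simp
  have A: "(\<Sum>n\<in>{Suc m..Suc N}. 1 / (real n)\<^sup>2) = 1 / (real (Suc N))\<^sup>2 + (\<Sum>n\<in>{Suc m..N}. 1 / (real n)\<^sup>2)"
    using step.hyps by (simp add: atLeastAtMostSuc_conv)
  have C: "1 / (real (Suc N))\<^sup>2 \<le> 1 / real N - 1 / real (Suc N)"
  proof -
    have e: "real (Suc N) = real N + 1" by simp
    have "1 / real N - 1 / (real N + 1) = 1 / (real N * (real N + 1))"
      using N1 by (simp add: field_simps)
    moreover have "1 / (real N + 1)\<^sup>2 \<le> 1 / (real N * (real N + 1))"
      using N1 by (intro divide_left_mono) (auto simp: power2_eq_square intro!: mult_right_mono)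
    ultimately show ?thesis unfolding e by linarith
  qed
  show ?case using A C step.IH by linarith
qed

lemma gaussian_tail_sum_le:
  assumes b: "\<beta> > 0"
  shows "(\<Sum>n\<in>{Suc (Suc K)..N}. exp (- \<beta> * (real n)\<^sup>2)) \<le> 1 / (\<beta> * (real K + 1))"
proof (cases "Suc K \<le> N")
  case True
  have "(\<Sum>n\<in>{Suc (Suc K)..N}. exp (- \<beta> * (real n)\<^sup>2))
      \<le> (\<Sum>n\<in>{Suc (Suc K)..N}. (1 / \<beta>) * (1 / (real n)\<^sup>2))"
  proof (rule sum_mono)
    fix n assume "n \<in> {Suc (Suc K)..N}"
    then have "\<beta> * (real n)\<^sup>2 > 0" using b by simp
    then have "exp (- (\<beta> * (real n)\<^sup>2)) \<le> 1 / (\<beta> * (real n)\<^sup>2)" by (rule exp_neg_le_inverse)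
    then show "exp (- \<beta> * (real n)\<^sup>2) \<le> (1 / \<beta>) * (1 / (real n)\<^sup>2)" by simp
  qed
  also have "\<dots> = (1 / \<beta>) * (\<Sum>n\<in>{Suc (Suc K)..N}. 1 / (real n)\<^sup>2)"
    by (simp add: sum_distrib_left)
  also have "\<dots> \<le> (1 / \<beta>) * (1 / real (Suc K) - 1 / real N)"
    using b by (intro mult_left_mono sum_inverse_square_tail True) auto
  also have "\<dots> \<le> (1 / \<beta>) * (1 / real (Suc K))"
    using b True by (intro mult_left_mono) auto
  finally show ?thesis by (simp add: add.commute)
next
  case False
  then show ?thesis using b by simp
qed

lemma gaussian_sum_le:
  assumes b: "\<beta> > 0"
  shows "(\<Sum>n\<le>N. exp (- \<beta> * (real n)\<^sup>2)) \<le> 2 + 2 / sqrt \<beta>"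
proof -
  define K where "K = nat \<lfloor>1 / sqrt \<beta>\<rfloor>"
  have "0 \<le> \<lfloor>1 / sqrt \<beta>\<rfloor>" using b by simp
  then have K_floor: "real K = of_int \<lfloor>1 / sqrt \<beta>\<rfloor>" by (simp add: K_def)
  have K: "real K \<le> 1 / sqrt \<beta>" "1 / sqrt \<beta> < real K + 1"
    using K_floor by (simp, linarith)
  let ?f = "\<lambda>n. exp (- \<beta> * (real n)\<^sup>2)"
  have "(\<Sum>n\<le>N. ?f n) \<le> (\<Sum>n\<in>{..Suc K} \<union> {Suc (Suc K)..N}. ?f n)"
    by (rule sum_mono2) auto
  also have "\<dots> = (\<Sum>n\<le>Suc K. ?f n) + (\<Sum>n\<in>{Suc (Suc K)..N}. ?f n)"
    by (rule sum.union_disjoint) auto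
  also have "(\<Sum>n\<le>Suc K. ?f n) \<le> real (card {..Suc K}) * 1"
    by (rule sum_bounded_above) (use b in simp)
  also have "(\<Sum>n\<in>{Suc (Suc K)..N}. ?f n) \<le> 1 / (\<beta> * (real K + 1))"
    by (rule gaussian_tail_sum_le[OF b])
  also have "1 / (\<beta> * (real K + 1)) \<le> 1 / sqrt \<beta>"
  proof -
    have sb: "sqrt \<beta> > 0" using b by simp
    then have "1 < (real K + 1) * sqrt \<beta>"
      using K(2) by (simp add: divide_less_eq)
    then have "1 \<le> sqrt \<beta> * (real K + 1)" by (metis less_imp_le mult.commute)
    then have "sqrt \<beta> * 1 \<le> sqrt \<beta> * (sqrt \<beta> * (real K + 1))"
      using sb by (intro mult_left_mono) auto
    then have "sqrt \<beta> \<le> \<beta> * (real K + 1)" using b by (simp add: mult.assoc[symmetric])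
    moreover have "0 < \<beta> * (real K + 1) * sqrt \<beta>" using b sb by simp
    ultimately show ?thesis by (intro divide_left_mono) auto
  qed
  finally show ?thesis using K(1) by simp
qed

lemma shifted_gaussian_sum_le:
  assumes c: "c \<le> N"
  shows "(\<Sum>m<N. exp (- \<beta> * (real m - real c)\<^sup>2)) \<le> 2 * (\<Sum>n\<le>N. exp (- \<beta> * (real n)\<^sup>2))"
proof -
  let ?f = "\<lambda>m. exp (- \<beta> * (real m - real c)\<^sup>2)" and ?g = "\<lambda>n. exp (- \<beta> * (real n)\<^sup>2)"
  have "(\<Sum>m<N. ?f m) = (\<Sum>m\<in>{m. m < N \<and> c \<le> m} \<union> {m. m < N \<and> m < c}. ?f m)"
    by (rule sum.cong) auto
  also have "\<dots> = (\<Sum>m\<in>{m. m < N \<and> c \<le> m}. ?f m) + (\<Sum>m\<in>{m. m < N \<and> m < c}. ?f m)"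
    by (rule sum.union_disjoint) auto
  also have "(\<Sum>m\<in>{m. m < N \<and> c \<le> m}. ?f m) \<le> (\<Sum>n\<le>N. ?g n)"
  proof (rule sum_le_included[where i="\<lambda>n. n + c"])
    show "\<forall>x\<in>{m. m < N \<and> c \<le> m}. \<exists>y\<in>{..N}. y + c = x \<and> ?f x \<le> ?g y"
    proof
      fix x assume x: "x \<in> {m. m < N \<and> c \<le> m}"
      then have e: "real x - real c = real (x - c)" by simp
      have "x - c \<in> {..N}" using x by auto
      moreover have "(x - c) + c = x" using x by auto
      moreover have "?f x \<le> ?g (x - c)" by (simp only: e order.refl)
      ultimately show "\<exists>y\<in>{..N}. y + c = x \<and> ?f x \<le> ?g y" by blast
    qed
  qed auto
  also have "(\<Sum>m\<in>{m. m < N \<and> m < c}. ?f m) \<le> (\<Sum>n\<le>N. ?g n)"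
  proof (rule sum_le_included[where i="\<lambda>n. c - n"])
    show "\<forall>x\<in>{m. m < N \<and> m < c}. \<exists>y\<in>{..N}. c - y = x \<and> ?f x \<le> ?g y"
    proof
      fix x assume x: "x \<in> {m. m < N \<and> m < c}"
      then have e: "(real x - real c)\<^sup>2 = (real (c - x))\<^sup>2" by (simp add: power2_commute of_nat_diff)
      have "c - x \<in> {..N}" using x c by auto
      moreover have "c - (c - x) = x" using x by auto
      moreover have "?f x \<le> ?g (c - x)" by (simp only: e order.refl)
      ultimately show "\<exists>y\<in>{..N}. c - y = x \<and> ?f x \<le> ?g y" by blast
    qed
  qed auto
  finally show ?thesis by simp
qed

lemma exp_2pi_i_eq_1_iff:
  fixes w :: int and N :: nat
  assumes N: "N > 0"
  shows "exp (\<i> * of_real (2 * pi * of_int w / real N)) = 1 \<longleftrightarrow> int N dvd w"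
proof
  assume "exp (\<i> * of_real (2 * pi * of_int w / real N)) = 1"
  then obtain n :: int where "2 * pi * of_int w / real N = of_int (2 * n) * pi"
    unfolding exp_eq_1 by auto
  then have "real_of_int w = real N * of_int n" using N by (simp add: field_simps)
  then have "w = int N * n" by (metis of_int_eq_iff of_int_mult of_int_of_nat_eq)
  then show "int N dvd w" by simp
next
  assume "int N dvd w"
  then obtain q where "w = int N * q" by (auto elim: dvdE)
  then have "Im (\<i> * of_real (2 * pi * of_int w / real N)) = of_int (2 * q) * pi"
    using N by simp
  then show "exp (\<i> * of_real (2 * pi * of_int w / real N)) = 1"
    unfolding exp_eq_1 by auto
qed

lemma character_sum:
  fixes w :: int and N :: nat
  assumes N: "N > 0"
  shows "(\<Sum>m<N. exp (\<i> * of_real (2 * pi * real m * of_int w / real N)))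
           = (if int N dvd w then of_nat N else 0)"
proof -
  define z where "z = exp (\<i> * of_real (2 * pi * of_int w / real N))"
  have "exp (\<i> * of_real (2 * pi * real m * of_int w / real N)) = z ^ m" for m
  proof -
    have "\<i> * complex_of_real (2 * pi * real m * of_int w / real N)
        = of_nat m * (\<i> * of_real (2 * pi * of_int w / real N))"
      by (simp add: field_simps)
    then show ?thesis unfolding z_def by (simp only: exp_of_nat_mult)
  qed
  then have sum_z: "(\<Sum>m<N. exp (\<i> * of_real (2 * pi * real m * of_int w / real N))) = (\<Sum>m<N. z ^ m)"
    by simp
  have "z ^ N = exp (\<i> * of_real (2 * pi * of_int w / real 1))"
    unfolding z_def exp_of_nat_mult[symmetric] using N by (simp add: field_simps)
  also have "\<dots> = 1" by (subst exp_2pi_i_eq_1_iff) simp_all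
  finally have "z ^ N = 1" .
  moreover have "z = 1 \<longleftrightarrow> int N dvd w" unfolding z_def by (rule exp_2pi_i_eq_1_iff[OF N])
  ultimately show ?thesis unfolding sum_z by (simp add: sum_gp_strict)
qed

lemma expectation_eq_infsum_pmf:
  fixes f :: "'a \<Rightarrow> real"
  assumes "(\<lambda>x. pmf q x * f x) summable_on UNIV"
  shows "integrable (measure_pmf q) f" and "measure_pmf.expectation q f = (\<Sum>\<^sub>\<infinity>x. pmf q x * f x)"
proof -
  have "(\<lambda>x. norm (pmf q x * f x)) summable_on UNIV"
    using assms by (rule summable_on_iff_abs_summable_on_real[THEN iffD1])
  then have abs_summable: "Infinite_Set_Sum.abs_summable_on (\<lambda>x. pmf q x * f x) UNIV"
    by (rule abs_summable_equivalent[THEN iffD1])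
  then have "integrable (density (count_space UNIV) (\<lambda>x. ennreal (pmf q x))) f"
    by (subst integrable_density) (simp_all add: Infinite_Set_Sum.abs_summable_on_def)
  then show "integrable (measure_pmf q) f" by (simp add: measure_pmf_eq_density)
  have "measure_pmf.expectation q f = (\<integral>x. pmf q x * f x \<partial>count_space UNIV)"
    by (simp add: measure_pmf_eq_density integral_density)
  also have "\<dots> = (\<Sum>\<^sub>\<infinity>x. pmf q x * f x)"
    using infsetsum_infsum[OF abs_summable] by (simp add: infsetsum_def)
  finally show "measure_pmf.expectation q f = (\<Sum>\<^sub>\<infinity>x. pmf q x * f x)" .
qed

lemma integral_bind_pmf_bounded:
  fixes f :: "'a \<Rightarrow> real"
  assumes "\<And>x. \<bar>f x\<bar> \<le> B"
  shows "measure_pmf.expectation (bind_pmf M N) f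
         = measure_pmf.expectation M (\<lambda>x. measure_pmf.expectation (N x) f)"
  unfolding measure_pmf_bind
  by (rule integral_bind[where K="count_space UNIV" and B=B and B'=1])
     (auto simp: assms space_subprob_algebra subprob_space_measure_pmf measure_pmf.emeasure_space_1
           intro: measure_pmf.finite_measure_axioms)

lemma integrable_measure_pmf_bounded:
  fixes f :: "'a \<Rightarrow> real"
  assumes "\<And>x. \<bar>f x\<bar> \<le> B"
  shows "integrable (measure_pmf M) f"
  by (rule measure_pmf.integrable_const_bound[where B=B]) (auto simp: assms)

lemma expectation_eq_0_on_support:
  fixes f :: "'a \<Rightarrow> real"
  assumes "integrable (measure_pmf q) f" "\<And>x. f x \<ge> 0" "measure_pmf.expectation q f = 0"
    and "x \<in> set_pmf q"
  shows "f x = 0"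
proof -
  have "AE y in measure_pmf q. f y = 0"
    using assms(1-3) by (subst (asm) integral_nonneg_eq_0_iff_AE) auto
  then show ?thesis using assms(4) by (simp add: AE_measure_pmf_iff)
qed

definition rvec :: "int ^ 4 \<Rightarrow> real ^ 4" where "rvec x = (\<chi> i. real_of_int (x $ i))"

lemma rvec_nth [simp]: "rvec x $ i = real_of_int (x $ i)" by (simp add: rvec_def)
lemma rvec_diff: "rvec (x - y) = rvec x - rvec y" by (simp add: vec_eq_iff)
lemma rvec_add: "rvec (x + y) = rvec x + rvec y" by (simp add: vec_eq_iff)
lemma rvec_minus: "rvec (- x) = - rvec x" by (simp add: vec_eq_iff)
lemma rvec_0 [simp]: "rvec 0 = 0" by (simp add: vec_eq_iff)

lemma znorm_eq_norm_rvec: "znorm x = norm (rvec x)"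
  by (simp add: znorm_def norm_vec_def L2_set_def)

lemma znorm_nonneg [simp]: "znorm x \<ge> 0"
  by (simp add: znorm_eq_norm_rvec)

lemma abs_coordinate_le_znorm: "\<bar>real_of_int (x $ i)\<bar> \<le> znorm x"
  unfolding znorm_eq_norm_rvec using component_le_norm_cart[of "rvec x" i] by simp

lemma abs_inner_rvec_le: "\<bar>s \<bullet> rvec x\<bar> \<le> norm s * znorm x"
  unfolding znorm_eq_norm_rvec by (rule Cauchy_Schwarz_ineq2)

lemma inner_square_eq_double_sum:
  "(s \<bullet> (v::real ^ 'n))\<^sup>2 = (\<Sum>i\<in>UNIV. \<Sum>j\<in>UNIV. s$i * s$j * (v$i * v$j))"
  unfolding inner_vec_def power2_eq_square sum_product
  by (intro sum.cong refl) (simp add: mult_ac)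

lemma integrable_cos_inner: "integrable (measure_pmf q) (\<lambda>x. cos (t \<bullet> rvec x))"
  by (rule integrable_measure_pmf_bounded[where B=1]) simp

lemma integrable_sin_inner: "integrable (measure_pmf q) (\<lambda>x. sin (t \<bullet> rvec x))"
  by (rule integrable_measure_pmf_bounded[where B=1]) simp

definition period_box :: "(real ^ 4) set" where "period_box = cbox 0 (\<chi> i. 2 * pi)"

locale walk_Z4 =
  fixes \<theta> :: "(int ^ 4) pmf" and \<sigma> :: real
  assumes symmetric: "\<And>x. pmf \<theta> (- x) = pmf \<theta> x"
    and exp_moment: "\<exists>c>0. (\<lambda>x. pmf \<theta> x * exp (c * znorm x)) summable_on UNIV"
    and not_strict_subgroup: "\<not> (\<exists>H. add_subgroup H \<and> H \<noteq> UNIV \<and> set_pmf \<theta> \<subseteq> H)"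
    and covariance: "\<And>i j. (\<Sum>\<^sub>\<infinity>x. pmf \<theta> x * real_of_int (x $ i) * real_of_int (x $ j))
                         = (if i = j then \<sigma>\<^sup>2 else 0)"
begin

lemma summable_on_moment_bounded:
  assumes h: "\<And>x. \<bar>h x\<bar> \<le> A * (1 + znorm x ^ 4)"
  shows "(\<lambda>x. pmf \<theta> x * h x) summable_on UNIV"
proof -
  obtain c where c: "c > 0" and S: "(\<lambda>x. pmf \<theta> x * exp (c * znorm x)) summable_on UNIV"
    using exp_moment by blast
  have A: "A \<ge> 0"
  proof -
    have "0 \<le> A * (1 + znorm 0 ^ 4)" using h[of 0] by (meson abs_ge_zero order_trans)
    moreover have "1 + znorm 0 ^ 4 > 0" by (simp add: add_pos_nonneg)
    ultimately show ?thesis by (simp add: zero_le_mult_iff)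
  qed
  define D where "D = A * (1 + (4 / c) ^ 4)"
  have "(\<lambda>x. D * (pmf \<theta> x * exp (c * znorm x))) summable_on UNIV"
    by (rule summable_on_cmult_right[OF S])
  then have "(\<lambda>x. \<bar>pmf \<theta> x * h x\<bar>) summable_on UNIV"
  proof (rule summable_on_comparison_test)
    fix x
    have "\<bar>pmf \<theta> x * h x\<bar> = pmf \<theta> x * \<bar>h x\<bar>" by (simp add: abs_mult)
    also have "\<dots> \<le> pmf \<theta> x * (A * (1 + znorm x ^ 4))" by (intro mult_left_mono h) simp
    also have "\<dots> \<le> pmf \<theta> x * (A * ((1 + (4 / c) ^ 4) * exp (c * znorm x)))"
      using power4_le_exp[OF znorm_nonneg c] A by (intro mult_left_mono) auto
    also have "\<dots> = D * (pmf \<theta> x * exp (c * znorm x))" by (simp add: D_def mult_ac)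
    finally show "\<bar>pmf \<theta> x * h x\<bar> \<le> D * (pmf \<theta> x * exp (c * znorm x))" .
  qed simp
  then have "(\<lambda>x. norm (pmf \<theta> x * h x)) summable_on UNIV" by (simp add: real_norm_def)
  then show ?thesis by (rule summable_on_iff_abs_summable_on_real[THEN iffD2])
qed

lemmas integrable_moment_bounded = expectation_eq_infsum_pmf(1)[OF summable_on_moment_bounded]
lemmas expectation_moment_bounded = expectation_eq_infsum_pmf(2)[OF summable_on_moment_bounded]

lemma integrable_znorm_power: "k \<le> 4 \<Longrightarrow> integrable (measure_pmf \<theta>) (\<lambda>x. znorm x ^ k)"
  by (rule integrable_moment_bounded[where A=1]) (simp add: power_le_1_plus_power4)

lemma abs_coordinate_product_le: "\<bar>real_of_int (x $ i) * real_of_int (x $ j)\<bar> \<le> znorm x ^ 2"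
  unfolding abs_mult power2_eq_square by (intro mult_mono abs_coordinate_le_znorm) auto

lemma integrable_coordinate_product:
  "integrable (measure_pmf \<theta>) (\<lambda>x. real_of_int (x $ i) * real_of_int (x $ j))"
  by (rule Bochner_Integration.integrable_bound[OF integrable_znorm_power[of 2]])
     (simp_all add: abs_coordinate_product_le)

lemma expectation_coordinate_product:
  "measure_pmf.expectation \<theta> (\<lambda>x. real_of_int (x $ i) * real_of_int (x $ j))
     = (if i = j then \<sigma>\<^sup>2 else 0)"
proof -
  have "\<bar>real_of_int (x $ i) * real_of_int (x $ j)\<bar> \<le> 1 * (1 + znorm x ^ 4)" for x
    using abs_coordinate_product_le[of x i j] power_le_1_plus_power4[of 2 "znorm x"] by simp
  from expectation_moment_bounded[OF this] show ?thesis
    by (simp add: covariance mult.assoc[symmetric])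
qed

lemma expectation_inner_square:
  "measure_pmf.expectation \<theta> (\<lambda>x. (s \<bullet> rvec x)\<^sup>2) = \<sigma>\<^sup>2 * (norm s)\<^sup>2"
proof -
  have "measure_pmf.expectation \<theta> (\<lambda>x. (s \<bullet> rvec x)\<^sup>2)
     = (\<Sum>i\<in>UNIV. \<Sum>j\<in>UNIV. s$i * s$j *
          measure_pmf.expectation \<theta> (\<lambda>x. real_of_int (x $ i) * real_of_int (x $ j)))"
    unfolding inner_square_eq_double_sum
    by (simp add: integrable_coordinate_product Bochner_Integration.integral_sum
        Bochner_Integration.integrable_sum)
  also have "\<dots> = (\<Sum>i\<in>UNIV. s$i * s$i * \<sigma>\<^sup>2)"
    by (simp add: expectation_coordinate_product if_distrib cong: if_cong)
  also have "\<dots> = \<sigma>\<^sup>2 * (norm s)\<^sup>2"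
    unfolding power2_norm_eq_inner inner_vec_def sum_distrib_left
    by (intro sum.cong refl) (simp add: mult_ac)
  finally show ?thesis .
qed

lemma integrable_inner_power:
  assumes "k \<le> 4"
  shows "integrable (measure_pmf \<theta>) (\<lambda>x. (s \<bullet> rvec x) ^ k)"
proof (rule Bochner_Integration.integrable_bound)
  show "integrable (measure_pmf \<theta>) (\<lambda>x. norm s ^ k * znorm x ^ k)"
    using integrable_znorm_power[OF assms] by simp
  show "AE x in measure_pmf \<theta>. norm ((s \<bullet> rvec x) ^ k) \<le> norm (norm s ^ k * znorm x ^ k)"
    using power_mono[OF abs_inner_rvec_le abs_ge_zero, of s _ k]
    by (simp add: power_abs power_mult_distrib)
qed simp

lemma expectation_inner_power4_le:
  "measure_pmf.expectation \<theta> (\<lambda>x. (s \<bullet> rvec x) ^ 4)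
     \<le> norm s ^ 4 * measure_pmf.expectation \<theta> (\<lambda>x. znorm x ^ 4)"
proof -
  have "(s \<bullet> rvec x) ^ 4 \<le> norm s ^ 4 * znorm x ^ 4" for x
    using power_mono[OF abs_inner_rvec_le abs_ge_zero, of s x 4]
    by (simp add: power_mult_distrib power_even_abs_numeral)
  then have "measure_pmf.expectation \<theta> (\<lambda>x. (s \<bullet> rvec x) ^ 4)
      \<le> measure_pmf.expectation \<theta> (\<lambda>x. norm s ^ 4 * znorm x ^ 4)"
    by (intro integral_mono integrable_inner_power integrable_mult_right integrable_znorm_power)
      simp_all
  then show ?thesis by simp
qed

lemma sigma_squared_pos: "\<sigma>\<^sup>2 > 0"
proof (rule ccontr)
  assume "\<not> \<sigma>\<^sup>2 > 0"
  then have "\<sigma>\<^sup>2 = 0" by (simp add: not_less)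
  then have "real_of_int (x $ i) * real_of_int (x $ i) = 0" if "x \<in> set_pmf \<theta>" for x i
    using expectation_eq_0_on_support[OF integrable_coordinate_product[of i i] _ _ that]
      expectation_coordinate_product[of i i] by simp
  then have "set_pmf \<theta> \<subseteq> {0}" by (auto simp: vec_eq_iff)
  moreover have "add_subgroup {0::int^4}" by (simp add: add_subgroup_def)
  moreover have "(1::int^4) \<notin> {0}" by (simp add: vec_eq_iff)
  ultimately show False using not_strict_subgroup by blast
qed

section \<open>The characteristic function\<close>

definition phi :: "real ^ 4 \<Rightarrow> real" where
  "phi t = measure_pmf.expectation \<theta> (\<lambda>x. cos (t \<bullet> rvec x))"

lemma abs_phi_le_1: "\<bar>phi t\<bar> \<le> 1"
proof -
  have "\<bar>phi t\<bar> \<le> measure_pmf.expectation \<theta> (\<lambda>x. \<bar>cos (t \<bullet> rvec x)\<bar>)"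
    unfolding phi_def using integral_norm_bound[of "measure_pmf \<theta>" "\<lambda>x. cos (t \<bullet> rvec x)"]
    by simp
  also have "\<dots> \<le> measure_pmf.expectation \<theta> (\<lambda>x. 1)"
    by (rule integral_mono) (auto intro: integrable_measure_pmf_bounded[where B=1])
  finally show ?thesis by simp
qed

lemma expectation_sin_walk: "measure_pmf.expectation (walk_pmf \<theta> j) (\<lambda>x. sin (t \<bullet> rvec x)) = 0"
proof -
  have "measure_pmf.expectation (walk_pmf \<theta> j) (\<lambda>x. sin (t \<bullet> rvec x))
      = measure_pmf.expectation (map_pmf uminus (walk_pmf \<theta> j)) (\<lambda>x. sin (t \<bullet> rvec x))"
    by (simp add: map_pmf_uminus_walk_pmf[OF symmetric])
  also have "\<dots> = measure_pmf.expectation (walk_pmf \<theta> j) (\<lambda>x. - sin (t \<bullet> rvec x))"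
    by (simp add: rvec_minus)
  also have "\<dots> = - measure_pmf.expectation (walk_pmf \<theta> j) (\<lambda>x. sin (t \<bullet> rvec x))"
    by simp
  finally show ?thesis by simp
qed

lemma expectation_cos_walk: "measure_pmf.expectation (walk_pmf \<theta> j) (\<lambda>x. cos (t \<bullet> rvec x)) = phi t ^ j"
proof (induction j)
  case 0
  then show ?case by simp
next
  case (Suc j)
  have "measure_pmf.expectation (walk_pmf \<theta> (Suc j)) (\<lambda>x. cos (t \<bullet> rvec x))
      = measure_pmf.expectation (walk_pmf \<theta> j)
          (\<lambda>s. measure_pmf.expectation (map_pmf (\<lambda>y. s + y) \<theta>) (\<lambda>x. cos (t \<bullet> rvec x)))"
    by (simp only: walk_pmf.simps(2), rule integral_bind_pmf_bounded[where B=1]) simp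
  also have "\<dots> = measure_pmf.expectation (walk_pmf \<theta> j) (\<lambda>s. cos (t \<bullet> rvec s) * phi t)"
  proof (rule Bochner_Integration.integral_cong[OF refl])
    fix s
    have "measure_pmf.expectation (map_pmf (\<lambda>y. s + y) \<theta>) (\<lambda>x. cos (t \<bullet> rvec x))
        = measure_pmf.expectation \<theta> (\<lambda>y. cos (t \<bullet> rvec s) * cos (t \<bullet> rvec y) - sin (t \<bullet> rvec s) * sin (t \<bullet> rvec y))"
      by (simp add: rvec_add inner_add_right cos_add)
    also have "\<dots> = cos (t \<bullet> rvec s) * phi t - sin (t \<bullet> rvec s) * measure_pmf.expectation \<theta> (\<lambda>y. sin (t \<bullet> rvec y))"
      unfolding phi_def
      by (subst Bochner_Integration.integral_diff) (auto intro: integrable_cos_inner integrable_sin_inner)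
    also have "measure_pmf.expectation \<theta> (\<lambda>y. sin (t \<bullet> rvec y)) = 0"
      using expectation_sin_walk[of 1 t] by (simp only: walk_pmf_1)
    finally show "measure_pmf.expectation (map_pmf (\<lambda>y. s + y) \<theta>) (\<lambda>x. cos (t \<bullet> rvec x))
        = cos (t \<bullet> rvec s) * phi t" by simp
  qed
  also have "\<dots> = phi t ^ Suc j" using Suc by simp
  finally show ?case .
qed

lemma expectation_cos_diff_walk: "measure_pmf.expectation (walk_pmf \<theta> j) (\<lambda>z. cos (t \<bullet> rvec z - t \<bullet> rvec y))
    = cos (t \<bullet> rvec y) * phi t ^ j"
proof -
  have "measure_pmf.expectation (walk_pmf \<theta> j) (\<lambda>z. cos (t \<bullet> rvec z - t \<bullet> rvec y))
      = measure_pmf.expectation (walk_pmf \<theta> j) (\<lambda>z. cos (t \<bullet> rvec y) * cos (t \<bullet> rvec z) + sin (t \<bullet> rvec y) * sin (t \<bullet> rvec z))"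
    by (simp add: cos_diff mult_ac)
  also have "\<dots> = cos (t \<bullet> rvec y) * phi t ^ j + sin (t \<bullet> rvec y) * 0"
    by (subst Bochner_Integration.integral_add) (auto intro: integrable_cos_inner integrable_sin_inner simp: expectation_cos_walk expectation_sin_walk)
  finally show ?thesis by simp
qed

lemma phi_lipschitz: "\<bar>phi t - phi t'\<bar> \<le> measure_pmf.expectation \<theta> znorm * norm (t - t')"
proof -
  have iz: "integrable (measure_pmf \<theta>) znorm" using integrable_znorm_power[of 1] by simp
  have "\<bar>phi t - phi t'\<bar> = \<bar>measure_pmf.expectation \<theta> (\<lambda>x. cos (t \<bullet> rvec x) - cos (t' \<bullet> rvec x))\<bar>"
    unfolding phi_def by (simp add: integrable_cos_inner)
  also have "\<dots> \<le> measure_pmf.expectation \<theta> (\<lambda>x. \<bar>cos (t \<bullet> rvec x) - cos (t' \<bullet> rvec x)\<bar>)"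
    using integral_norm_bound[of "measure_pmf \<theta>" "\<lambda>x. cos (t \<bullet> rvec x) - cos (t' \<bullet> rvec x)"] by simp
  also have "\<dots> \<le> measure_pmf.expectation \<theta> (\<lambda>x. norm (t - t') * znorm x)"
  proof (rule integral_mono)
    show "integrable (measure_pmf \<theta>) (\<lambda>x. \<bar>cos (t \<bullet> rvec x) - cos (t' \<bullet> rvec x)\<bar>)"
      by (rule integrable_measure_pmf_bounded[where B=2]) (simp add: abs_cos_diff_le_2)
    show "integrable (measure_pmf \<theta>) (\<lambda>x. norm (t - t') * znorm x)" using iz by simp
    fix x
    have "\<bar>cos (t \<bullet> rvec x) - cos (t' \<bullet> rvec x)\<bar> \<le> \<bar>t \<bullet> rvec x - t' \<bullet> rvec x\<bar>" by (rule abs_cos_diff_le)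
    also have "\<dots> = \<bar>(t - t') \<bullet> rvec x\<bar>" by (simp add: inner_diff_left)
    also have "\<dots> \<le> norm (t - t') * znorm x" unfolding znorm_eq_norm_rvec by (rule Cauchy_Schwarz_ineq2)
    finally show "\<bar>cos (t \<bullet> rvec x) - cos (t' \<bullet> rvec x)\<bar> \<le> norm (t - t') * znorm x" .
  qed
  also have "\<dots> = measure_pmf.expectation \<theta> znorm * norm (t - t')" by simp
  finally show ?thesis .
qed

lemma continuous_on_phi: "continuous_on A phi"
proof (rule lipschitz_on_continuous_on)
  show "(measure_pmf.expectation \<theta> znorm)-lipschitz_on A phi"
  proof (rule lipschitz_onI)
    fix t t' show "dist (phi t) (phi t') \<le> measure_pmf.expectation \<theta> znorm * dist t t'"
      using phi_lipschitz[of t t'] by (simp add: dist_real_def dist_norm)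
    show "0 \<le> measure_pmf.expectation \<theta> znorm"
      by (rule integral_nonneg_AE) (simp add: znorm_eq_norm_rvec)
  qed
qed

lemma phi_upper_Taylor:
  "phi s \<le> 1 - \<sigma>\<^sup>2 * (norm s)\<^sup>2 / 2 + norm s ^ 4 * measure_pmf.expectation \<theta> (\<lambda>x. znorm x ^ 4) / 24"
proof -
  let ?A = "\<lambda>x. (s \<bullet> rvec x)\<^sup>2" and ?B = "\<lambda>x. (s \<bullet> rvec x) ^ 4"
  have iA: "integrable (measure_pmf \<theta>) ?A" and iB: "integrable (measure_pmf \<theta>) ?B"
    using integrable_inner_power[of 2 s] integrable_inner_power[of 4 s] by simp_all
  have "phi s \<le> measure_pmf.expectation \<theta> (\<lambda>x. 1 - ?A x / 2 + ?B x / 24)"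
    unfolding phi_def
    by (rule integral_mono)
       (auto intro!: integrable_cos_inner cos_le_Taylor4 Bochner_Integration.integrable_add
         Bochner_Integration.integrable_diff integrable_divide iA iB)
  also have "\<dots> = 1 - measure_pmf.expectation \<theta> ?A / 2 + measure_pmf.expectation \<theta> ?B / 24"
    using iA iB by simp
  finally show ?thesis
    using expectation_inner_square[of s] expectation_inner_power4_le[of s] by linarith
qed

lemma phi_lower_Taylor: "1 - \<sigma>\<^sup>2 * (norm s)\<^sup>2 / 2 \<le> phi s"
proof -
  let ?A = "\<lambda>x. (s \<bullet> rvec x)\<^sup>2"
  have iA: "integrable (measure_pmf \<theta>) ?A"
    using integrable_inner_power[of 2 s] by simp
  have "measure_pmf.expectation \<theta> (\<lambda>x. 1 - ?A x / 2) \<le> phi s"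
    unfolding phi_def
    by (rule integral_mono)
       (auto intro!: integrable_cos_inner cos_ge_Taylor2 Bochner_Integration.integrable_diff
         integrable_divide iA)
  moreover have "measure_pmf.expectation \<theta> (\<lambda>x. 1 - ?A x / 2) = 1 - \<sigma>\<^sup>2 * (norm s)\<^sup>2 / 2"
    using iA expectation_inner_square[of s] by simp
  ultimately show ?thesis by simp
qed

text \<open>
  With \<open>M = E|x|\<^sup>4\<close>, for \<open>|s|\<^sup>2 \<le> 6\<sigma>\<^sup>2 / M\<close> the quartic Taylor term eats at most half of
  the quadratic one.
\<close>
lemma phi_quadratic_decay:
  "\<exists>c r. c > 0 \<and> r > 0 \<and>
     (\<forall>s. norm s < r \<longrightarrow> \<bar>phi s\<bar> \<le> 1 - c * (norm s)\<^sup>2)"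
proof -
  define M where "M = measure_pmf.expectation \<theta> (\<lambda>x. znorm x ^ 4)"
  have M: "M \<ge> 0" unfolding M_def by (rule integral_nonneg_AE) simp
  define S where "S = \<sigma>\<^sup>2"
  have S: "S > 0" unfolding S_def by (rule sigma_squared_pos)
  define r where "r = min 1 (min (6 * S / (M + 1)) (1 / S))"
  have "\<bar>phi s\<bar> \<le> 1 - S / 4 * (norm s)\<^sup>2" if "norm s < r" for s
  proof -
    define n where "n = norm s"
    have n0: "n \<ge> 0" and n1: "n < 1" using that by (simp_all add: n_def r_def)
    have "n\<^sup>2 \<le> n" using n0 n1 by (simp add: power2_eq_square mult_left_le_one_le)
    then have nr: "n\<^sup>2 < r" using that unfolding n_def by linarith
    have "S * n\<^sup>2 \<le> 1" using nr S by (simp add: r_def field_simps)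
    have MnA: "M * n\<^sup>2 \<le> 6 * S"
    proof -
      have "(M + 1) * n\<^sup>2 \<le> 6 * S" using nr M by (simp add: r_def field_simps)
      moreover have "M * n\<^sup>2 \<le> (M + 1) * n\<^sup>2" by (simp add: mult_right_mono)
      ultimately show ?thesis by linarith
    qed
    have quartic: "n ^ 4 * M / 24 \<le> S * n\<^sup>2 / 4"
    proof -
      have "n ^ 4 * M = n\<^sup>2 * (M * n\<^sup>2)" by (simp add: power2_eq_square eval_nat_numeral mult_ac)
      also have "\<dots> \<le> n\<^sup>2 * (6 * S)" by (rule mult_left_mono[OF MnA]) simp
      finally show ?thesis by (simp add: mult_ac)
    qed
    have "0 \<le> phi s" using phi_lower_Taylor[of s] \<open>S * n\<^sup>2 \<le> 1\<close> unfolding S_def n_def by linarith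
    moreover have "phi s \<le> 1 - S * n\<^sup>2 / 4"
      using phi_upper_Taylor[of s] quartic unfolding S_def M_def n_def by linarith
    ultimately show ?thesis by (simp add: n_def)
  qed
  moreover have "r > 0" using S M by (simp add: r_def)
  ultimately show ?thesis using S by (intro exI[of _ "S / 4"] exI[of _ r]) auto
qed

lemma phi_unit_on_support:
  assumes u: "\<bar>phi t0\<bar> = 1" and x: "x \<in> set_pmf \<theta>"
  shows "cos (t0 \<bullet> rvec x) = phi t0" and "sin (t0 \<bullet> rvec x) = 0"
proof -
  define e where "e = phi t0"
  have "\<bar>e\<bar> * \<bar>e\<bar> = 1" using u by (simp add: e_def)
  then have e2: "e * e = 1" by (simp add: abs_mult_self_eq)
  have nonneg: "0 \<le> 1 - e * cos (t0 \<bullet> rvec y)" for y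
  proof -
    have "\<bar>e * cos (t0 \<bullet> rvec y)\<bar> \<le> 1" using u by (simp add: e_def abs_mult)
    then show ?thesis by linarith
  qed
  have int: "integrable (measure_pmf \<theta>) (\<lambda>y. 1 - e * cos (t0 \<bullet> rvec y))"
    by (intro Bochner_Integration.integrable_diff integrable_mult_right integrable_cos_inner) simp
  have "measure_pmf.expectation \<theta> (\<lambda>y. 1 - e * cos (t0 \<bullet> rvec y)) = 1 - e * e"
    unfolding phi_def e_def by (subst Bochner_Integration.integral_diff) (auto intro: integrable_cos_inner)
  then have "1 - e * cos (t0 \<bullet> rvec x) = 0"
    using expectation_eq_0_on_support[OF int nonneg _ x] e2 by simp
  then have "e * (e * cos (t0 \<bullet> rvec x)) = e" by simp
  then have c: "cos (t0 \<bullet> rvec x) = e"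
    using e2 by (simp add: mult.assoc[symmetric])
  then show "cos (t0 \<bullet> rvec x) = phi t0" by (simp add: e_def)
  have "(sin (t0 \<bullet> rvec x))\<^sup>2 = 1 - (cos (t0 \<bullet> rvec x))\<^sup>2" by (rule sin_squared_eq)
  also have "\<dots> = 0" using c e2 by (simp add: power2_eq_square)
  finally show "sin (t0 \<bullet> rvec x) = 0" by simp
qed

lemma phi_add_unit:
  assumes u: "\<bar>phi t0\<bar> = 1"
  shows "phi (t0 + s) = phi t0 * phi s"
proof -
  have "phi (t0 + s) = measure_pmf.expectation \<theta> (\<lambda>x. phi t0 * cos (s \<bullet> rvec x))"
    unfolding phi_def[of "t0 + s"]
    by (rule integral_cong_AE)
       (simp_all add: AE_measure_pmf_iff inner_add_left cos_add phi_unit_on_support[OF u])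
  then show ?thesis by (simp add: phi_def)
qed

text \<open>Aperiodicity enters here: \<open>{x. cos (2 t\<cdot>x) = 1}\<close> is a subgroup containing the support.\<close>
lemma phi_unit_coordinates:
  assumes u: "\<bar>phi t\<bar> = 1"
  shows "\<exists>n::int. t $ i = of_int n * pi"
proof -
  define H where "H = {x. cos (2 * (t \<bullet> rvec x)) = 1}"
  have sinH: "sin (2 * (t \<bullet> rvec x)) = 0" if "x \<in> H" for x
  proof -
    have "(sin (2 * (t \<bullet> rvec x)))\<^sup>2 = 1 - (cos (2 * (t \<bullet> rvec x)))\<^sup>2" by (rule sin_squared_eq)
    then show ?thesis using that unfolding H_def by simp
  qed
  have "add_subgroup H"
    unfolding add_subgroup_def
  proof (intro conjI ballI)
    show "0 \<in> H" unfolding H_def by simp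
    fix x y assume x: "x \<in> H" and y: "y \<in> H"
    have "cos (2 * (t \<bullet> rvec (x - y))) = cos (2 * (t \<bullet> rvec x) - 2 * (t \<bullet> rvec y))"
      by (simp add: rvec_diff inner_diff_right algebra_simps)
    also have "\<dots> = 1"
      using x y sinH[OF x] sinH[OF y] unfolding cos_diff H_def by simp
    finally show "x - y \<in> H" unfolding H_def by simp
  qed
  moreover have "set_pmf \<theta> \<subseteq> H"
  proof
    fix x assume x: "x \<in> set_pmf \<theta>"
    have c: "cos (t \<bullet> rvec x) = phi t" by (rule phi_unit_on_support(1)[OF u x])
    have "(phi t)\<^sup>2 = 1" using u by (metis abs_power2 one_power2 power2_abs)
    then show "x \<in> H" unfolding H_def using c by (simp add: cos_double_cos)
  qed
  ultimately have HU: "H = UNIV" using not_strict_subgroup by blast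
  have "axis i (1::int) \<in> H" using HU by simp
  moreover have "rvec (axis i (1::int)) = axis i 1"
    by (simp add: vec_eq_iff axis_def)
  ultimately have "cos (2 * t $ i) = 1" unfolding H_def by (simp add: inner_axis)
  then obtain n :: int where "2 * t $ i = of_int n * 2 * pi" using cos_one_2pi_int by blast
  then have "t $ i = of_int n * pi" by simp
  then show ?thesis by blast
qed

definition unit_points :: "(real ^ 4) set" where
  "unit_points = {t0 \<in> period_box. \<bar>phi t0\<bar> = 1}"

lemma unit_points_coordinates: "t \<in> unit_points \<Longrightarrow> t $ i \<in> {0, pi, 2 * pi}"
proof -
  assume t: "t \<in> unit_points"
  then have u: "\<bar>phi t\<bar> = 1" and tb: "0 \<le> t $ i" "t $ i \<le> 2 * pi"
    by (auto simp: unit_points_def period_box_def mem_box_cart)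
  obtain n :: int where n: "t $ i = of_int n * pi" using phi_unit_coordinates[OF u] by blast
  have "0 \<le> of_int n * pi" "of_int n * pi \<le> 2 * pi" using tb n by auto
  then have "0 \<le> n" "n \<le> 2" using pi_gt_zero
    by (auto simp: zero_le_mult_iff mult_le_cancel_right)
  then have "n = 0 \<or> n = 1 \<or> n = 2" by auto
  then show ?thesis using n by auto
qed

lemma finite_unit_points: "finite unit_points"
proof (rule finite_subset)
  show "unit_points \<subseteq> vec_lambda ` (PiE UNIV (\<lambda>_. {0, pi, 2 * pi}))"
  proof
    fix t assume t: "t \<in> unit_points"
    have "(\<lambda>i. t $ i) \<in> PiE UNIV (\<lambda>_. {0, pi, 2 * pi})" using unit_points_coordinates[OF t] by auto
    moreover have "t = vec_lambda (\<lambda>i. t $ i)" by simp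
    ultimately show "t \<in> vec_lambda ` (PiE UNIV (\<lambda>_. {0, pi, 2 * pi}))" by blast
  qed
  show "finite (vec_lambda ` (PiE UNIV (\<lambda>_. {0, pi, 2 * pi})))"
    by (intro finite_imageI finite_PiE) auto
qed

lemma phi_gap:
  assumes r: "r > 0"
  shows "\<exists>\<delta>>0. \<delta> \<le> 1 \<and> (\<forall>t\<in>period_box. (\<forall>t0\<in>unit_points. r \<le> dist t t0) \<longrightarrow> \<bar>phi t\<bar> \<le> 1 - \<delta>)"
proof -
  define K where "K = period_box - (\<Union>t0\<in>unit_points. ball t0 r)"
  have cK: "compact K" unfolding K_def period_box_def
    by (intro compact_diff compact_cbox open_UN ballI open_ball)
  have inK: "t \<in> K" if "t \<in> period_box" "\<forall>t0\<in>unit_points. r \<le> dist t t0" for t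
    using that unfolding K_def by (auto simp: dist_commute)
  show ?thesis
  proof (cases "K = {}")
    case True
    then show ?thesis using inK by (intro exI[of _ "1/2"]) auto
  next
    case False
    have "continuous_on K (\<lambda>t. \<bar>phi t\<bar>)" by (intro continuous_on_rabs continuous_on_phi)
    then obtain ts where ts: "ts \<in> K" and mx: "\<And>t. t \<in> K \<Longrightarrow> \<bar>phi t\<bar> \<le> \<bar>phi ts\<bar>"
      using continuous_attains_sup[OF cK False] by blast
    have "\<bar>phi ts\<bar> < 1"
    proof (rule ccontr)
      assume "\<not> \<bar>phi ts\<bar> < 1"
      then have "\<bar>phi ts\<bar> = 1" using abs_phi_le_1[of ts] by linarith
      moreover have "ts \<in> period_box" using ts unfolding K_def by auto
      ultimately have "ts \<in> unit_points" unfolding unit_points_def by auto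
      then have "ts \<in> (\<Union>t0\<in>unit_points. ball t0 r)" using r by (intro UN_I[of ts]) auto
      then show False using ts unfolding K_def by auto
    qed
    then show ?thesis using inK mx abs_phi_le_1[of ts]
      by (intro exI[of _ "1 - \<bar>phi ts\<bar>"]) force
  qed
qed

end

section \<open>Discrete Fourier inversion on a grid\<close>

definition grid :: "nat \<Rightarrow> (4 \<Rightarrow> nat) set" where "grid N = PiE UNIV (\<lambda>_. {..<N})"

definition grid_point :: "nat \<Rightarrow> (4 \<Rightarrow> nat) \<Rightarrow> real ^ 4" where
  "grid_point N k = (\<chi> i. 2 * pi * real (k i) / real N)"

lemma card_grid: "card (grid N) = N ^ 4"
  unfolding grid_def by (simp add: card_PiE)

lemma grid_point_in_period_box: "N > 0 \<Longrightarrow> k \<in> grid N \<Longrightarrow> grid_point N k \<in> period_box"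
  unfolding period_box_def mem_box_cart grid_def grid_point_def
  by (auto simp: field_simps PiE_iff) (metis less_imp_le_nat)

lemma sum_grid_prod:
  fixes g :: "4 \<Rightarrow> nat \<Rightarrow> 'a::comm_semiring_1"
  shows "(\<Sum>k\<in>grid N. \<Prod>i\<in>UNIV. g i (k i)) = (\<Prod>i\<in>UNIV. \<Sum>m<N. g i m)"
  unfolding grid_def by (rule prod_sum_PiE[symmetric]) auto

lemma grid_cos_sum:
  assumes N: "N > 0"
  shows "(\<Sum>k\<in>grid N. cos (grid_point N k \<bullet> rvec w)) = (if \<forall>i. int N dvd w $ i then real N ^ 4 else 0)"
proof -
  define f where "f i m = exp (\<i> * of_real (2 * pi * real m * of_int (w $ i) / real N))" for i m
  have "cos (grid_point N k \<bullet> rvec w) = Re (\<Prod>i\<in>UNIV. f i (k i))" for k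
  proof -
    have "(\<Prod>i\<in>UNIV. f i (k i)) = exp (\<Sum>i\<in>UNIV. \<i> * of_real (2 * pi * real (k i) * of_int (w $ i) / real N))"
      unfolding f_def by (simp add: exp_sum)
    also have "(\<Sum>i\<in>UNIV. \<i> * of_real (2 * pi * real (k i) * of_int (w $ i) / real N))
        = \<i> * of_real (grid_point N k \<bullet> rvec w)"
      by (simp add: grid_point_def inner_vec_def sum_distrib_left)
    finally show ?thesis by (simp add: Re_exp)
  qed
  then have "(\<Sum>k\<in>grid N. cos (grid_point N k \<bullet> rvec w)) = Re (\<Sum>k\<in>grid N. \<Prod>i\<in>UNIV. f i (k i))"
    by (simp add: Re_sum)
  also have "(\<Sum>k\<in>grid N. \<Prod>i\<in>UNIV. f i (k i)) = (\<Prod>i\<in>UNIV. \<Sum>m<N. f i m)"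
    by (rule sum_grid_prod)
  also have "\<dots> = (\<Prod>i\<in>UNIV. if int N dvd w $ i then of_nat N else 0)"
    unfolding f_def using character_sum[OF N] by simp
  also have "\<dots> = (if \<forall>i. int N dvd w $ i then of_nat N ^ 4 else 0)"
  proof (cases "\<forall>i. int N dvd w $ i")
    case True
    then show ?thesis by simp
  next
    case False
    then obtain i where "\<not> int N dvd w $ i" by blast
    then show ?thesis by (simp add: prod_zero_iff) blast
  qed
  finally show ?thesis by auto
qed

lemma grid_gaussian_sum_1:
  assumes N: "N > 0" and b: "b > 0" and Nb: "real N \<ge> 4 * sqrt b" and c: "c \<le> N"
  shows "(\<Sum>m<N. exp (- b * (2 * pi * real m / real N - 2 * pi * real c / real N)\<^sup>2)) \<le> 2 * real N / sqrt b"
proof -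
  define \<beta> where "\<beta> = b * (2 * pi / real N)\<^sup>2"
  have \<beta>0: "\<beta> > 0" unfolding \<beta>_def using b N by simp
  have sb: "sqrt b > 0" using b by simp
  have eq: "- b * (2 * pi * real m / real N - 2 * pi * real c / real N)\<^sup>2 = - \<beta> * (real m - real c)\<^sup>2" for m
    unfolding \<beta>_def using N by (simp add: field_simps power2_eq_square)
  have "(\<Sum>m<N. exp (- b * (2 * pi * real m / real N - 2 * pi * real c / real N)\<^sup>2))
      = (\<Sum>m<N. exp (- \<beta> * (real m - real c)\<^sup>2))" by (simp only: eq)
  also have "\<dots> \<le> 2 * (\<Sum>n\<le>N. exp (- \<beta> * (real n)\<^sup>2))" by (rule shifted_gaussian_sum_le[OF c])
  also have "\<dots> \<le> 2 * (2 + 2 / sqrt \<beta>)" by (rule mult_left_mono[OF gaussian_sum_le[OF \<beta>0]]) simp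
  also have "sqrt \<beta> = sqrt b * (2 * pi / real N)"
    unfolding \<beta>_def using N by (simp add: real_sqrt_mult)
  also have "2 * (2 + 2 / (sqrt b * (2 * pi / real N))) = 4 + (2 / pi) * (real N / sqrt b)"
    using N sb by (simp add: field_simps)
  also have "\<dots> \<le> real N / sqrt b + 1 * (real N / sqrt b)"
  proof (rule add_mono)
    show "4 \<le> real N / sqrt b" using Nb sb by (simp add: field_simps)
    show "2 / pi * (real N / sqrt b) \<le> 1 * (real N / sqrt b)"
      using pi_ge_two N sb by (intro mult_right_mono) (auto simp: field_simps)
  qed
  finally show ?thesis by simp
qed

lemma unit_coordinate_on_grid:
  assumes N: "N > 0" "even N" and c: "c \<in> {0, pi, 2 * pi}"
  shows "\<exists>m\<le>N. c = 2 * pi * real m / real N"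
proof -
  have "2 * pi * real (N div 2) / real N = pi"
    using N by (auto elim!: evenE simp: field_simps)
  then show ?thesis using c N
    by (auto intro: exI[of _ 0] exI[of _ "N div 2"] exI[of _ N])
qed

lemma grid_gaussian_sum:
  assumes N: "N > 0" and Ne: "even N" and b: "b > 0" and Nb: "real N \<ge> 4 * sqrt b"
    and t0: "\<And>i. t0 $ i \<in> {0, pi, 2 * pi}"
  shows "(\<Sum>k\<in>grid N. exp (- b * (norm (grid_point N k - t0))\<^sup>2)) \<le> real N ^ 4 * (16 / b\<^sup>2)"
proof -
  obtain c where c: "\<And>i. c i \<le> N" "\<And>i. t0 $ i = 2 * pi * real (c i) / real N"
    using unit_coordinate_on_grid[OF N Ne t0] by metis
  define g where "g i m = exp (- b * (2 * pi * real m / real N - 2 * pi * real (c i) / real N)\<^sup>2)"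
    for i m
  have "exp (- b * (norm (grid_point N k - t0))\<^sup>2) = (\<Prod>i\<in>UNIV. g i (k i))" for k
  proof -
    have "- b * (norm (grid_point N k - t0))\<^sup>2
        = (\<Sum>i\<in>UNIV. - b * (2 * pi * real (k i) / real N - 2 * pi * real (c i) / real N)\<^sup>2)"
      unfolding power2_norm_eq_inner inner_vec_def
      by (simp add: grid_point_def c(2) power2_eq_square sum_distrib_left)
    then show ?thesis unfolding g_def by (simp add: exp_sum)
  qed
  then have "(\<Sum>k\<in>grid N. exp (- b * (norm (grid_point N k - t0))\<^sup>2)) = (\<Prod>i\<in>UNIV. \<Sum>m<N. g i m)"
    by (simp add: sum_grid_prod)
  also have "\<dots> \<le> (\<Prod>i\<in>(UNIV::4 set). 2 * real N / sqrt b)"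
  proof (rule prod_mono)
    fix i
    have "0 \<le> (\<Sum>m<N. g i m)" by (rule sum_nonneg) (simp add: g_def)
    moreover have "(\<Sum>m<N. g i m) \<le> 2 * real N / sqrt b"
      unfolding g_def by (rule grid_gaussian_sum_1[OF N b Nb c(1)])
    ultimately show "0 \<le> (\<Sum>m<N. g i m) \<and> (\<Sum>m<N. g i m) \<le> 2 * real N / sqrt b" by simp
  qed
  also have "\<dots> = real N ^ 4 * (16 / b\<^sup>2)"
  proof -
    have "sqrt b ^ 4 = (sqrt b ^ 2) ^ 2" by (simp flip: power_mult)
    then have "sqrt b ^ 4 = b\<^sup>2" using b by simp
    then show ?thesis using b by (simp add: power_divide power_mult_distrib)
  qed
  finally show ?thesis .
qed

section \<open>The heat-kernel bound\<close>

context walk_Z4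
begin

text \<open>
  The grid sum of characters is \<open>N\<^sup>4\<close> at \<open>z = y\<close> and nonnegative elsewhere, so it dominates
  \<open>N\<^sup>4\<close> times the indicator of \<open>y\<close>; taking expectations turns each character into \<open>\<phi>\<^sup>j\<close>.
\<close>
lemma pmf_walk_le_grid_sum:
  assumes N: "N > 0"
  shows "pmf (walk_pmf \<theta> j) y \<le> (\<Sum>k\<in>grid N. \<bar>phi (grid_point N k)\<bar> ^ j) / real N ^ 4"
proof -
  let ?W = "measure_pmf (walk_pmf \<theta> j)"
  have "real N ^ 4 * pmf (walk_pmf \<theta> j) y = integral\<^sup>L ?W (\<lambda>z. real N ^ 4 * indicator {y} z)"
    by (simp add: measure_pmf_single)
  also have "\<dots> \<le> integral\<^sup>L ?W (\<lambda>z. \<Sum>k\<in>grid N. cos (grid_point N k \<bullet> rvec (z - y)))"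
  proof (rule integral_mono)
    show "integrable ?W (\<lambda>z. real N ^ 4 * indicator {y} z)"
      by (rule integrable_measure_pmf_bounded[where B="real N ^ 4"]) (simp split: split_indicator)
    show "integrable ?W (\<lambda>z. \<Sum>k\<in>grid N. cos (grid_point N k \<bullet> rvec (z - y)))"
      by (intro Bochner_Integration.integrable_sum integrable_measure_pmf_bounded[where B=1]) simp
    fix z
    show "real N ^ 4 * indicator {y} z \<le> (\<Sum>k\<in>grid N. cos (grid_point N k \<bullet> rvec (z - y)))"
      unfolding grid_cos_sum[OF N] by (auto split: split_indicator)
  qed
  also have "\<dots> = (\<Sum>k\<in>grid N. integral\<^sup>L ?W (\<lambda>z. cos (grid_point N k \<bullet> rvec z - grid_point N k \<bullet> rvec y)))"
    by (subst Bochner_Integration.integral_sum)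
       (auto intro: integrable_measure_pmf_bounded[where B=1] simp: rvec_diff inner_diff_right)
  also have "\<dots> = (\<Sum>k\<in>grid N. cos (grid_point N k \<bullet> rvec y) * phi (grid_point N k) ^ j)"
    by (simp add: expectation_cos_diff_walk)
  also have "\<dots> \<le> (\<Sum>k\<in>grid N. \<bar>phi (grid_point N k)\<bar> ^ j)"
  proof (rule sum_mono)
    fix k
    have "cos (grid_point N k \<bullet> rvec y) * phi (grid_point N k) ^ j \<le> \<bar>cos (grid_point N k \<bullet> rvec y) * phi (grid_point N k) ^ j\<bar>"
      by simp
    also have "\<dots> = \<bar>cos (grid_point N k \<bullet> rvec y)\<bar> * \<bar>phi (grid_point N k)\<bar> ^ j" by (simp add: abs_mult power_abs)
    also have "\<dots> \<le> 1 * \<bar>phi (grid_point N k)\<bar> ^ j" by (intro mult_right_mono) auto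
    finally show "cos (grid_point N k \<bullet> rvec y) * phi (grid_point N k) ^ j \<le> \<bar>phi (grid_point N k)\<bar> ^ j" by simp
  qed
  finally show ?thesis using N by (simp add: field_simps)
qed

lemma abs_phi_power_le:
  "\<exists>c \<delta>. c > 0 \<and> 0 < \<delta> \<and> \<delta> \<le> 1 \<and> (\<forall>t\<in>period_box. \<forall>j. \<bar>phi t\<bar> ^ j
      \<le> (1 - \<delta>) ^ j + (\<Sum>t0\<in>unit_points. exp (- (c * real j) * (norm (t - t0))\<^sup>2)))"
proof -
  obtain c r where c: "c > 0" and r: "r > 0"
    and quad: "\<forall>s. norm s < r \<longrightarrow> \<bar>phi s\<bar> \<le> 1 - c * (norm s)\<^sup>2"
    using phi_quadratic_decay by blast
  obtain \<delta> where d: "\<delta> > 0" "\<delta> \<le> 1"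
    and gap: "\<forall>t\<in>period_box. (\<forall>t0\<in>unit_points. r \<le> dist t t0) \<longrightarrow> \<bar>phi t\<bar> \<le> 1 - \<delta>"
    using phi_gap[OF r] by blast
  let ?G = "\<lambda>t j. \<Sum>t0\<in>unit_points. exp (- (c * real j) * (norm (t - t0))\<^sup>2)"
  have "\<bar>phi t\<bar> ^ j \<le> (1 - \<delta>) ^ j + ?G t j" if t: "t \<in> period_box" for t j
  proof (cases "\<exists>t0\<in>unit_points. dist t t0 < r")
    case True
    then obtain t0 where t0: "t0 \<in> unit_points" "dist t t0 < r" by blast
    have u: "\<bar>phi t0\<bar> = 1" using t0 unfolding unit_points_def by simp
    have "\<bar>phi t\<bar> = \<bar>phi (t - t0)\<bar>"
      using phi_add_unit[OF u, of "t - t0"] u by (simp add: abs_mult)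
    also have "\<dots> \<le> 1 - c * (norm (t - t0))\<^sup>2" using quad t0 by (simp add: dist_norm)
    also have "\<dots> \<le> exp (- (c * (norm (t - t0))\<^sup>2))"
      using exp_ge_add_one_self[of "- (c * (norm (t - t0))\<^sup>2)"] by simp
    finally have "\<bar>phi t\<bar> ^ j \<le> exp (- (c * (norm (t - t0))\<^sup>2)) ^ j"
      by (intro power_mono) simp_all
    also have "\<dots> = exp (- (c * real j) * (norm (t - t0))\<^sup>2)"
      by (simp add: exp_of_nat_mult[symmetric] mult_ac)
    also have "\<dots> \<le> ?G t j"
      by (rule member_le_sum) (use t0 finite_unit_points in auto)
    finally have "\<bar>phi t\<bar> ^ j \<le> ?G t j" .
    moreover have "0 \<le> (1 - \<delta>) ^ j" using d by simp
    ultimately show ?thesis by simp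
  next
    case False
    then have "\<bar>phi t\<bar> \<le> 1 - \<delta>" using gap t by (auto simp: not_less)
    then have "\<bar>phi t\<bar> ^ j \<le> (1 - \<delta>) ^ j" by (intro power_mono) simp_all
    moreover have "0 \<le> ?G t j" by (rule sum_nonneg) simp
    ultimately show ?thesis by simp
  qed
  then show ?thesis using c d by blast
qed

lemma pmf_walk_le_inverse_square: "\<exists>A. \<forall>j y. j \<ge> 1 \<longrightarrow> pmf (walk_pmf \<theta> j) y \<le> A / (real j)\<^sup>2"
proof -
  obtain c \<delta> where c: "c > 0" and d: "0 < \<delta>" "\<delta> \<le> 1"
    and pointwise: "\<And>t j. t \<in> period_box \<Longrightarrow> \<bar>phi t\<bar> ^ j
      \<le> (1 - \<delta>) ^ j + (\<Sum>t0\<in>unit_points. exp (- (c * real j) * (norm (t - t0))\<^sup>2))"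
    using abs_phi_power_le by blast
  define A where "A = 4 / \<delta>\<^sup>2 + real (card unit_points) * 16 / c\<^sup>2"
  have "pmf (walk_pmf \<theta> j) y \<le> A / (real j)\<^sup>2" if j: "j \<ge> 1" for j y
  proof -
    define b where "b = c * real j"
    have b: "b > 0" unfolding b_def using c j by simp
    define N where "N = 4 * (nat \<lceil>sqrt b\<rceil> + 1)"
    have N: "N > 0" "even N" by (simp_all add: N_def)
    have Nb: "real N \<ge> 4 * sqrt b"
      using real_nat_ceiling_ge[of "sqrt b"] by (simp add: N_def)
    have "pmf (walk_pmf \<theta> j) y \<le> (\<Sum>k\<in>grid N. \<bar>phi (grid_point N k)\<bar> ^ j) / real N ^ 4"
      by (rule pmf_walk_le_grid_sum[OF N(1)])
    also have "\<dots> \<le> (\<Sum>k\<in>grid N. (1 - \<delta>) ^ j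
        + (\<Sum>t0\<in>unit_points. exp (- b * (norm (grid_point N k - t0))\<^sup>2))) / real N ^ 4"
      unfolding b_def
      by (intro divide_right_mono sum_mono pointwise grid_point_in_period_box[OF N(1)]) auto
    also have "\<dots> = (real N ^ 4 * (1 - \<delta>) ^ j
        + (\<Sum>t0\<in>unit_points. \<Sum>k\<in>grid N. exp (- b * (norm (grid_point N k - t0))\<^sup>2))) / real N ^ 4"
      by (simp add: sum.distrib card_grid sum.swap[of _ "grid N" unit_points])
    also have "\<dots> \<le> (real N ^ 4 * (1 - \<delta>) ^ j + (\<Sum>t0\<in>unit_points. real N ^ 4 * (16 / b\<^sup>2))) / real N ^ 4"
      by (intro divide_right_mono add_left_mono sum_mono grid_gaussian_sum[OF N b Nb]
          unit_points_coordinates) auto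
    also have "\<dots> = (1 - \<delta>) ^ j + real (card unit_points) * (16 / b\<^sup>2)"
      using N by (simp add: field_simps)
    also have "\<dots> \<le> 4 / (\<delta>\<^sup>2 * (real j)\<^sup>2) + real (card unit_points) * (16 / b\<^sup>2)"
      using one_minus_power_le[OF d j] by simp
    also have "\<dots> = A / (real j)\<^sup>2"
      unfolding A_def b_def using j c d by (simp add: field_simps power_mult_distrib)
    finally show ?thesis .
  qed
  then show ?thesis by blast
qed

lemma inverse_square_le_consecutive:
  assumes "j \<ge> 1"
  shows "1 / (real j)\<^sup>2 \<le> 6 / ((real j + 1) * (real j + 2))"
proof -
  have j: "real j \<ge> 1" using assms by simp
  then have "real j * 1 \<le> real j * real j" by (intro mult_left_mono) auto
  then have "2 + 3 * real j \<le> 5 * (real j * real j)" using j by linarith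
  then have "(real j + 1) * (real j + 2) \<le> 6 * (real j)\<^sup>2"
    by (simp add: power2_eq_square algebra_simps)
  then have "6 / (6 * (real j)\<^sup>2) \<le> 6 / ((real j + 1) * (real j + 2))"
    using j by (intro divide_left_mono) auto
  then show ?thesis by simp
qed

lemma heat_kernel_bound: "\<exists>K. \<forall>j y. pmf (walk_pmf \<theta> j) y \<le> K / ((real j + 1) * (real j + 2))"
proof -
  obtain A where A: "\<And>j y. j \<ge> 1 \<Longrightarrow> pmf (walk_pmf \<theta> j) y \<le> A / (real j)\<^sup>2"
    using pmf_walk_le_inverse_square by blast
  have "0 \<le> pmf (walk_pmf \<theta> 1) 0" by (rule pmf_nonneg)
  also have "\<dots> \<le> A / (real 1)\<^sup>2" by (rule A) simp
  finally have "A \<ge> 0" by simp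
  have "pmf (walk_pmf \<theta> j) y \<le> max 2 (6 * A) / ((real j + 1) * (real j + 2))" for j y
  proof (cases "j = 0")
    case True
    then show ?thesis by (simp add: le_max_iff_disj split: split_indicator)
  next
    case False
    then have "pmf (walk_pmf \<theta> j) y \<le> A * (1 / (real j)\<^sup>2)" using A by simp
    also have "\<dots> \<le> A * (6 / ((real j + 1) * (real j + 2)))"
      using False \<open>A \<ge> 0\<close> by (intro mult_left_mono inverse_square_le_consecutive) auto
    also have "\<dots> = 6 * A / ((real j + 1) * (real j + 2))" by simp
    also have "\<dots> \<le> max 2 (6 * A) / ((real j + 1) * (real j + 2))"
      by (intro divide_right_mono) auto
    finally show ?thesis .
  qed
  then show ?thesis by blast
qed

end

theorem lemma3p10:
  fixes \<theta> :: "(int ^ 4) pmf" and \<sigma> :: real and p :: nat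
  assumes symmetric: "\<And>x. pmf \<theta> (- x) = pmf \<theta> x"
    and exp_moment: "\<exists>c>0. (\<lambda>x. pmf \<theta> x * exp (c * znorm x)) summable_on UNIV"
    and not_strict_subgroup: "\<not> (\<exists>H. add_subgroup H \<and> H \<noteq> UNIV \<and> set_pmf \<theta> \<subseteq> H)"
    and covariance: "\<And>i j. (\<Sum>\<^sub>\<infinity>x. pmf \<theta> x * real_of_int (x $ i) * real_of_int (x $ j))
                         = (if i = j then \<sigma>\<^sup>2 else 0)"
    and p: "p \<ge> 1"
  shows "\<exists>C::real. \<forall>n::nat. n \<ge> 2 \<longrightarrow>
           (\<integral>\<^sup>+ xs. (\<Sum>x\<leftarrow>xs. green \<theta> x) ^ p \<partial>measure_pmf (path_pmf \<theta> n))
             \<le> ennreal (C * (ln (real n)) ^ p)"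
proof -
  interpret walk_Z4 \<theta> \<sigma>
    by unfold_locales (fact symmetric exp_moment not_strict_subgroup covariance)+
  obtain K where "\<And>j y. pmf (walk_pmf \<theta> j) y \<le> K / ((real j + 1) * (real j + 2))"
    using heat_kernel_bound by blast
  from green_sum_moment_le[OF symmetric this]
  show ?thesis by blast
qed

end
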